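(* There is a universal constant $c_0>0$ such that for all universal constants $c_1,c_2$ with $0<c_2\le c_1\le c_0$ there exists a universal constant $c_3>0$ such that the following holds. Let $\delta\in(0,1)$, $\varepsilon\in(0,1]$ and $\gamma\in[1/2,1)$. Suppose the learning rates satisfy, for all $0\le t\le T$, $$\frac{1}{1+\frac{c_1(1-\gamma)T}{\log^2 T}}\le \eta_t\le \frac{1}{1+\frac{c_2(1-\gamma)t}{\log^2 T}},$$ and the number of iterations $T$ satisfies $$T\ge \frac{c_3(\log^3 T)\,\log\frac{|\mathcal S|T}{\delta}}{(1-\gamma)^3\varepsilon^2}.$$ If the initialization obeys $0\le V_0(s)\le \frac{1}{1-\gamma}$ for all $s\in\mathcal S$, then with probability at least $1-\delta$ the synchronous TD learning iterate satisfies $\max_{s\in\mathcal S}|V_T(s)-V^\star(s)|\le\varepsilon$.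
   Context: A Markov reward process (MRP) consists of a finite state space $\mathcal S$, a transition kernel $P:\mathcal S\to\Delta(\mathcal S)$, a reward function $r:\mathcal S\to[0,1]$ and a discount factor $\gamma\in(0,1)$. Its value function is $V^\star(s)=\mathbb E\big[\sum_{k\ge0}\gamma^k r(s_k)\mid s_0=s\big]$ where $s_{k+1}\sim P(\cdot\mid s_k)$. Synchronous TD learning: in each iteration $t=1,2,\dots,T$, for every $s\in\mathcal S$ an independent sample $s_t(s)\sim P(\cdot\mid s)$ is drawn (independent across states and iterations), and $V_t(s)=(1-\eta_t)V_{t-1}(s)+\eta_t\big(r(s)+\gamma V_{t-1}(s_t(s))\big)$ for all $s$, with learning rates $\eta_t\in(0,1]$. Logarithms are natural. *)

theory Defs
  imports "HOL-Probability.Probability"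
begin

primrec kstep :: "(nat \<Rightarrow> nat pmf) \<Rightarrow> nat \<Rightarrow> nat \<Rightarrow> nat pmf" where
  "kstep P 0 s = return_pmf s"
| "kstep P (Suc k) s = bind_pmf (kstep P k s) P"

(* V*(s) = E[ sum_k gamma^k r(s_k) | s_0 = s ], written via linearity of
   expectation as sum_k gamma^k E[r(s_k)] *)
definition Vstar :: "(nat \<Rightarrow> nat pmf) \<Rightarrow> (nat \<Rightarrow> real) \<Rightarrow> real \<Rightarrow> nat \<Rightarrow> real" where
  "Vstar P r \<gamma> s = (\<Sum>k. \<gamma> ^ k * measure_pmf.expectation (kstep P k s) r)"

(* Synchronous TD iterates. omega (t, s) is the sample s_t(s) ~ P(.|s). *)
primrec td :: "(nat \<Rightarrow> real) \<Rightarrow> real \<Rightarrow> (nat \<Rightarrow> real) \<Rightarrow> (nat \<Rightarrow> real)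
                 \<Rightarrow> (nat \<times> nat \<Rightarrow> nat) \<Rightarrow> nat \<Rightarrow> nat \<Rightarrow> real" where
  "td r \<gamma> \<eta> V0 \<omega> 0 s = V0 s"
| "td r \<gamma> \<eta> V0 \<omega> (Suc t) s =
     (1 - \<eta> (Suc t)) * td r \<gamma> \<eta> V0 \<omega> t s
     + \<eta> (Suc t) * (r s + \<gamma> * td r \<gamma> \<eta> V0 \<omega> t (\<omega> (Suc t, s)))"

definition samples :: "nat set \<Rightarrow> (nat \<Rightarrow> nat pmf) \<Rightarrow> nat \<Rightarrow> (nat \<times> nat \<Rightarrow> nat) pmf" where
  "samples S P T = Pi_pmf ({1..T} \<times> S) 0 (\<lambda>(t, s). P s)"

end

theory Submission
  imports Defs
begin

text \<open>Let \<open>\<Delta>\<^sub>t = V\<^sub>t - V\<^sup>\<star>\<close>. By the Bellman equation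
  \<open>\<Delta>\<^sub>t = A\<^sub>t \<Delta>\<^sub>t\<^sub>-\<^sub>1 + \<eta>\<^sub>t \<gamma> \<xi>\<^sub>t\<close> with the nonnegative matrix \<open>A\<^sub>t = (1 - \<eta>\<^sub>t) I + \<eta>\<^sub>t \<gamma> P\<close>, whose
  row sums are \<open>1 - \<eta>\<^sub>t (1 - \<gamma>)\<close>, and the martingale difference
  \<open>\<xi>\<^sub>t(s) = V\<^sub>t\<^sub>-\<^sub>1(s\<^sub>t(s)) - (P V\<^sub>t\<^sub>-\<^sub>1)(s)\<close>. Unrolled over the last \<open>\<tau> = T div 4\<close> steps, the
  initial error is damped by \<open>\<Prod>(1 - \<eta>\<^sub>j (1 - \<gamma>)) \<le> 1 / T\<close>, while the accumulated noise obeys a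
  Bernstein-type tail bound. Its conditional variance is at most the largest step size times
  \<open>\<Sum>\<^sub>i \<eta>\<^sub>i A\<^sub>t \<cdots> A\<^sub>i\<^sub>+\<^sub>1 (2 \<gamma>\<^sup>2 Var\<^sub>P V\<^sup>\<star> + 2 B\<^sup>2)\<close>, where \<open>B\<close> bounds the current error; the
  first part telescopes to at most \<open>2 / (1 - \<gamma>)\<^sup>2\<close> by the Bellman equation for \<open>(V\<^sup>\<star>)\<^sup>2\<close>. To
  make this unconditional, the noise of a round is switched off once the error exceeds \<open>B\<close>.
  Two rounds suffice: the trivial \<open>B = 1 / (1 - \<gamma>)\<close> gives errors of order \<open>\<epsilon>\<close> on the last
  window, and feeding that bound back in gives \<open>\<epsilon>\<close>. A union bound over windows and states
  finishes the argument.\<close>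

section \<open>Exponential moments and tail bounds\<close>

lemma exp_le_quadratic:
  fixes y :: real
  assumes "y \<le> 1"
  shows "exp y \<le> 1 + y + y\<^sup>2"
proof (cases "0 \<le> y")
  case True
  then show ?thesis using exp_bound assms by auto
next
  case False
  have "exp y = 1 / exp (- y)" by (simp add: exp_minus field_simps)
  also have "\<dots> \<le> 1 / (1 - y)"
    using exp_ge_add_one_self[of "- y"] False by (intro divide_left_mono) auto
  also have "\<dots> \<le> 1 + y + y\<^sup>2"
  proof -
    have "y * (y * y) \<le> 0" using False by (intro mult_nonpos_nonneg) auto
    then have "1 \<le> (1 + y + y\<^sup>2) * (1 - y)" by (simp add: power2_eq_square algebra_simps)
    then show ?thesis using False by (simp add: divide_le_eq)
  qed
  finally show ?thesis .
qed

lemma expectation_exp_le_exp_second_moment: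
  fixes p :: "'a pmf" and f :: "'a \<Rightarrow> real"
  assumes fin: "finite (set_pmf p)" and mean: "measure_pmf.expectation p f = 0"
    and bound: "\<And>x. x \<in> set_pmf p \<Longrightarrow> \<bar>lam * f x\<bar> \<le> 1"
  shows "measure_pmf.expectation p (\<lambda>x. exp (lam * f x))
           \<le> exp (lam\<^sup>2 * measure_pmf.expectation p (\<lambda>x. (f x)\<^sup>2))"
proof -
  have int: "\<And>g :: 'a \<Rightarrow> real. integrable p g" by (rule integrable_measure_pmf_finite[OF fin])
  have "measure_pmf.expectation p (\<lambda>x. exp (lam * f x))
          \<le> measure_pmf.expectation p (\<lambda>x. 1 + lam * f x + lam\<^sup>2 * (f x)\<^sup>2)"
  proof (rule integral_mono_AE[OF int int], rule AE_pmfI)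
    fix x assume "x \<in> set_pmf p"
    then have "lam * f x \<le> 1" using bound by (simp add: abs_le_iff)
    then show "exp (lam * f x) \<le> 1 + lam * f x + lam\<^sup>2 * (f x)\<^sup>2"
      using exp_le_quadratic[of "lam * f x"] by (simp add: power_mult_distrib)
  qed
  also have "\<dots> = 1 + lam\<^sup>2 * measure_pmf.expectation p (\<lambda>x. (f x)\<^sup>2)"
    using int mean by (simp add: Bochner_Integration.integral_add)
  also have "\<dots> \<le> exp (lam\<^sup>2 * measure_pmf.expectation p (\<lambda>x. (f x)\<^sup>2))"
    by (rule exp_ge_add_one_self[unfolded add.commute[of _ 1]])
  finally show ?thesis .
qed

lemma prob_ge_le_exp_moment:
  fixes Q :: "'a pmf" and Z :: "'a \<Rightarrow> real"
  assumes "0 \<le> lam" and moment: "(\<integral>\<^sup>+\<omega>. ennreal (exp (lam * Z \<omega>)) \<partial>Q) \<le> ennreal (exp (lam\<^sup>2 * v))"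
  shows "measure_pmf.prob Q {\<omega>. a \<le> Z \<omega>} \<le> exp (lam\<^sup>2 * v - lam * a)"
proof -
  have "emeasure (measure_pmf Q) {\<omega>. a \<le> Z \<omega>} = (\<integral>\<^sup>+\<omega>. indicator {\<omega>. a \<le> Z \<omega>} \<omega> \<partial>Q)"
    by simp
  also have "\<dots> \<le> (\<integral>\<^sup>+\<omega>. ennreal (exp (- lam * a)) * ennreal (exp (lam * Z \<omega>)) \<partial>Q)"
  proof (rule nn_integral_mono)
    fix \<omega>
    show "indicator {\<omega>. a \<le> Z \<omega>} \<omega> \<le> ennreal (exp (- lam * a)) * ennreal (exp (lam * Z \<omega>))"
    proof (cases "a \<le> Z \<omega>")
      case True
      then have "0 \<le> lam * (Z \<omega> - a)" using \<open>0 \<le> lam\<close> by simp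
      then have "1 \<le> exp (- lam * a) * exp (lam * Z \<omega>)" by (simp add: exp_add[symmetric] algebra_simps)
      then show ?thesis using True by (simp add: ennreal_mult'[symmetric])
    qed simp
  qed
  also have "\<dots> = ennreal (exp (- lam * a)) * (\<integral>\<^sup>+\<omega>. ennreal (exp (lam * Z \<omega>)) \<partial>Q)"
    by (simp add: nn_integral_cmult)
  also have "\<dots> \<le> ennreal (exp (- lam * a)) * ennreal (exp (lam\<^sup>2 * v))"
    using moment by (intro mult_left_mono) auto
  also have "\<dots> = ennreal (exp (lam\<^sup>2 * v - lam * a))"
    by (simp add: ennreal_mult'[symmetric] exp_add[symmetric])
  finally show ?thesis by (simp add: measure_pmf.emeasure_eq_measure)
qed

text \<open>A Bernstein-type tail bound: the exponential moment bound is only available for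
  \<open>lam \<le> lm\<close>, so the optimal \<open>lam = sqrt (L / v)\<close> is used when admissible and \<open>lm\<close> otherwise.\<close>

lemma prob_ge_le_exp_neg:
  fixes Q :: "'a pmf" and Z :: "'a \<Rightarrow> real"
  assumes lm: "0 < lm" and v: "0 \<le> v" and L: "0 \<le> L"
    and moment: "\<And>lam. 0 \<le> lam \<Longrightarrow> lam \<le> lm \<Longrightarrow>
                   (\<integral>\<^sup>+\<omega>. ennreal (exp (lam * Z \<omega>)) \<partial>Q) \<le> ennreal (exp (lam\<^sup>2 * v))"
  shows "measure_pmf.prob Q {\<omega>. 2 * sqrt (L * v) + 2 * L / lm \<le> Z \<omega>} \<le> exp (- L)"
proof -
  define a where "a = 2 * sqrt (L * v) + 2 * L / lm"
  have a: "2 * sqrt (L * v) \<le> a" "2 * L / lm \<le> a" unfolding a_def using L lm v by auto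
  obtain lam where lam: "0 \<le> lam" "lam \<le> lm" "lam\<^sup>2 * v \<le> L" "2 * L \<le> lam * a"
  proof (cases "0 < v \<and> sqrt (L / v) \<le> lm")
    case True
    have "sqrt (L / v) * a \<ge> sqrt (L / v) * (2 * sqrt (L * v))"
      using a True L by (intro mult_left_mono) auto
    also have "sqrt (L / v) * (2 * sqrt (L * v)) = 2 * sqrt (L\<^sup>2)"
      using True by (simp add: real_sqrt_mult[symmetric] power2_eq_square field_simps)
    finally have "2 * L \<le> sqrt (L / v) * a" using L by simp
    then show ?thesis using True L by (intro that[of "sqrt (L / v)"]) auto
  next
    case False
    have "lm\<^sup>2 * v \<le> L"
    proof (cases "v = 0")
      case False
      then have "lm < sqrt (L / v)" using \<open>\<not> (0 < v \<and> sqrt (L / v) \<le> lm)\<close> v by auto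
      then have "lm\<^sup>2 < (sqrt (L / v))\<^sup>2" using lm by (intro power_strict_mono) auto
      then have "lm\<^sup>2 < L / v" using L v by simp
      then show ?thesis using v False by (simp add: field_simps)
    qed (use L in simp)
    moreover have "2 * L \<le> lm * a" using a(2) lm by (simp add: field_simps)
    ultimately show ?thesis using lm by (intro that[of lm]) auto
  qed
  have "measure_pmf.prob Q {\<omega>. a \<le> Z \<omega>} \<le> exp (lam\<^sup>2 * v - lam * a)"
    by (rule prob_ge_le_exp_moment[OF lam(1) moment[OF lam(1,2)]])
  also have "\<dots> \<le> exp (- L)" using lam by simp
  finally show ?thesis unfolding a_def .
qed

lemma prob_ge_1_minus:
  assumes "measure_pmf.prob Q B \<le> \<delta>" and "\<And>\<omega>. \<omega> \<in> set_pmf Q \<Longrightarrow> \<omega> \<notin> B \<Longrightarrow> \<omega> \<in> A"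
  shows "1 - \<delta> \<le> measure_pmf.prob Q A"
proof -
  have "1 - measure_pmf.prob Q B = measure_pmf.prob Q ((UNIV - B) \<inter> set_pmf Q)"
    using measure_pmf.prob_compl[of B Q] by (simp add: measure_Int_set_pmf)
  also have "\<dots> \<le> measure_pmf.prob Q A"
    using assms(2) by (intro measure_pmf.finite_measure_mono) auto
  finally show ?thesis using assms(1) by linarith
qed

lemma prob_UN_le_card_mult:
  fixes c :: real
  assumes "finite I" "\<And>x. x \<in> I \<Longrightarrow> measure_pmf.prob Q (A x) \<le> c"
  shows "measure_pmf.prob Q (\<Union>x\<in>I. A x) \<le> card I * c"
proof -
  have "measure_pmf.prob Q (\<Union>x\<in>I. A x) \<le> (\<Sum>x\<in>I. measure_pmf.prob Q (A x))"
    by (rule measure_pmf.finite_measure_subadditive_finite[OF assms(1)]) auto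
  also have "\<dots> \<le> card I * c" using sum_bounded_above[of I "\<lambda>x. measure_pmf.prob Q (A x)" c] assms by simp
  finally show ?thesis .
qed

section \<open>The sample space\<close>

lemma samples_Suc:
  assumes "finite S"
  shows "samples S P (Suc m) = map_pmf (\<lambda>(f, g) x. if x \<in> {1..m} \<times> S then f x else g x)
           (pair_pmf (samples S P m) (Pi_pmf ({Suc m} \<times> S) 0 (\<lambda>(t, s). P s)))"
proof -
  have split: "{1..Suc m} \<times> S = {1..m} \<times> S \<union> {Suc m} \<times> S" by auto
  show ?thesis unfolding samples_def split by (rule Pi_pmf_union) (use assms in auto)
qed

lemma samples_eq_0:
  assumes "finite S" "\<omega> \<in> set_pmf (samples S P m)" "x \<notin> {1..m} \<times> S"
  shows "\<omega> x = 0"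
proof -
  have "set_pmf (samples S P m) \<subseteq> {f. \<forall>x. x \<notin> {1..m} \<times> S \<longrightarrow> f x = 0}"
    unfolding samples_def by (rule set_Pi_pmf_subset) (use assms in auto)
  then show ?thesis using assms by blast
qed

lemma samples_in_set_pmf:
  assumes "finite S" "\<omega> \<in> set_pmf (samples S P m)" "j \<in> {1..m}" "y \<in> S"
  shows "\<omega> (j, y) \<in> set_pmf (P y)"
proof -
  have "set_pmf (samples S P m) \<subseteq> PiE_dflt ({1..m} \<times> S) 0 (set_pmf \<circ> (\<lambda>(t, s). P s))"
    unfolding samples_def by (rule set_Pi_pmf_subset') (use assms in auto)
  then show ?thesis using assms unfolding PiE_dflt_def by fastforce
qed

lemma nn_integral_samples_le_horizon:
  fixes G :: "(nat \<times> nat \<Rightarrow> nat) \<Rightarrow> ennreal"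
  assumes "finite S" "m \<le> n"
    and depends: "\<And>\<omega> \<omega>'. (\<And>j y. j \<le> m \<Longrightarrow> \<omega> (j, y) = \<omega>' (j, y)) \<Longrightarrow> G \<omega> = G \<omega>'"
  shows "(\<integral>\<^sup>+\<omega>. G \<omega> \<partial>samples S P n) = (\<integral>\<^sup>+\<omega>. G \<omega> \<partial>samples S P m)"
proof -
  have "samples S P m = map_pmf (\<lambda>f x. if x \<in> {1..m} \<times> S then f x else 0) (samples S P n)"
    unfolding samples_def by (rule Pi_pmf_subset) (use assms in auto)
  then have "(\<integral>\<^sup>+\<omega>. G \<omega> \<partial>samples S P m)
               = (\<integral>\<^sup>+\<omega>. G (\<lambda>x. if x \<in> {1..m} \<times> S then \<omega> x else 0) \<partial>samples S P n)"
    by simp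
  also have "\<dots> = (\<integral>\<^sup>+\<omega>. G \<omega> \<partial>samples S P n)"
  proof (rule nn_integral_cong_AE, rule AE_pmfI, rule depends)
    fix \<omega> j y assume \<omega>: "\<omega> \<in> set_pmf (samples S P n)" and "j \<le> m"
    then show "(if (j, y) \<in> {1..m} \<times> S then \<omega> (j, y) else 0) = \<omega> (j, y)"
      using samples_eq_0[OF \<open>finite S\<close> \<omega>, of "(j, y)"] \<open>m \<le> n\<close> by auto
  qed
  finally show ?thesis by simp
qed

lemma nn_integral_exp_sum_round_le:
  fixes H :: "nat \<Rightarrow> nat \<Rightarrow> real" and k :: nat
  assumes finS: "finite S" and supp: "\<And>s. s \<in> S \<Longrightarrow> set_pmf (P s) \<subseteq> S"
    and mean: "\<And>s. s \<in> S \<Longrightarrow> measure_pmf.expectation (P s) (H s) = 0"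
    and bound: "\<And>s x. s \<in> S \<Longrightarrow> x \<in> set_pmf (P s) \<Longrightarrow> \<bar>lam * H s x\<bar> \<le> 1"
    and var: "\<And>s. s \<in> S \<Longrightarrow> measure_pmf.expectation (P s) (\<lambda>x. (H s x)\<^sup>2) \<le> v s"
  shows "(\<integral>\<^sup>+g. ennreal (exp (lam * (\<Sum>s\<in>S. H s (g (k, s))))) \<partial>Pi_pmf ({k} \<times> S) 0 (\<lambda>(t, s). P s))
           \<le> ennreal (exp (lam\<^sup>2 * (\<Sum>s\<in>S. v s)))"
proof -
  define h where "h = (\<lambda>(x::nat \<times> nat) y. ennreal (exp (lam * H (snd x) y)))"
  have inj: "inj_on (Pair k) S" by (auto simp: inj_on_def)
  have img: "Pair k ` S = {k} \<times> S" by auto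
  have prod_h: "ennreal (exp (lam * (\<Sum>s\<in>S. H s (g (k, s))))) = (\<Prod>x\<in>{k} \<times> S. h x (g x))" for g :: "nat \<times> nat \<Rightarrow> nat"
  proof -
    have "ennreal (exp (lam * (\<Sum>s\<in>S. H s (g (k, s))))) = (\<Prod>s\<in>S. ennreal (exp (lam * H s (g (k, s)))))"
      by (simp add: sum_distrib_left exp_sum[OF finS] prod_ennreal)
    then show ?thesis unfolding img[symmetric] by (simp add: prod.reindex[OF inj] h_def)
  qed
  have expectation_le: "measure_pmf.expectation (P s) (\<lambda>y. exp (lam * H s y)) \<le> exp (lam\<^sup>2 * v s)"
    if s: "s \<in> S" for s
  proof -
    have fin: "finite (set_pmf (P s))" using supp[OF s] finS by (rule finite_subset)
    have "measure_pmf.expectation (P s) (\<lambda>y. exp (lam * H s y))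
            \<le> exp (lam\<^sup>2 * measure_pmf.expectation (P s) (\<lambda>x. (H s x)\<^sup>2))"
      by (rule expectation_exp_le_exp_second_moment[OF fin mean[OF s] bound[OF s]])
    also have "\<dots> \<le> exp (lam\<^sup>2 * v s)" using var[OF s] by (simp add: mult_left_mono)
    finally show ?thesis .
  qed
  have "(\<integral>\<^sup>+g. ennreal (exp (lam * (\<Sum>s\<in>S. H s (g (k, s))))) \<partial>Pi_pmf ({k} \<times> S) 0 (\<lambda>(t, s). P s))
          = (\<Prod>x\<in>{k} \<times> S. nn_integral ((\<lambda>(t, s). P s) x) (h x))"
    unfolding prod_h using finS by (intro nn_integral_prod_Pi_pmf) simp
  also have "\<dots> = (\<Prod>s\<in>S. ennreal (measure_pmf.expectation (P s) (\<lambda>y. exp (lam * H s y))))"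
    unfolding img[symmetric] prod.reindex[OF inj]
  proof (intro prod.cong refl)
    fix s assume s: "s \<in> S"
    have fin: "finite (set_pmf (P s))" using supp[OF s] finS by (rule finite_subset)
    show "((\<lambda>x. nn_integral ((\<lambda>(t, s). P s) x) (h x)) \<circ> Pair k) s
            = ennreal (measure_pmf.expectation (P s) (\<lambda>y. exp (lam * H s y)))"
      unfolding h_def by (simp, intro nn_integral_eq_integral integrable_measure_pmf_finite[OF fin]) auto
  qed
  also have "\<dots> = ennreal (\<Prod>s\<in>S. measure_pmf.expectation (P s) (\<lambda>y. exp (lam * H s y)))"
    by (rule prod_ennreal) (auto intro!: Bochner_Integration.integral_nonneg)
  also have "\<dots> \<le> ennreal (\<Prod>s\<in>S. exp (lam\<^sup>2 * v s))"
    using expectation_le by (intro ennreal_leI prod_mono) (auto intro!: Bochner_Integration.integral_nonneg)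
  also have "(\<Prod>s\<in>S. exp (lam\<^sup>2 * v s)) = exp (lam\<^sup>2 * (\<Sum>s\<in>S. v s))"
    by (simp add: sum_distrib_left exp_sum[OF finS])
  finally show ?thesis .
qed

lemma nn_integral_exp_samples_Suc_le:
  fixes M :: "(nat \<times> nat \<Rightarrow> nat) \<Rightarrow> real" and F :: "(nat \<times> nat \<Rightarrow> nat) \<Rightarrow> nat \<Rightarrow> nat \<Rightarrow> real"
  assumes finS: "finite S" and supp: "\<And>s. s \<in> S \<Longrightarrow> set_pmf (P s) \<subseteq> S"
    and M_adapted: "\<And>\<omega> \<omega>'. (\<And>j y. j \<le> m \<Longrightarrow> \<omega> (j, y) = \<omega>' (j, y)) \<Longrightarrow> M \<omega> = M \<omega>'"
    and F_adapted: "\<And>\<omega> \<omega>'. (\<And>j y. j \<le> m \<Longrightarrow> \<omega> (j, y) = \<omega>' (j, y)) \<Longrightarrow> F \<omega> = F \<omega>'"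
    and mean: "\<And>\<omega> s. s \<in> S \<Longrightarrow> measure_pmf.expectation (P s) (F \<omega> s) = 0"
    and bound: "\<And>\<omega> s x. s \<in> S \<Longrightarrow> x \<in> set_pmf (P s) \<Longrightarrow> \<bar>lam * F \<omega> s x\<bar> \<le> 1"
    and var: "\<And>\<omega> s. s \<in> S \<Longrightarrow> measure_pmf.expectation (P s) (\<lambda>x. (F \<omega> s x)\<^sup>2) \<le> v s"
  shows "(\<integral>\<^sup>+\<omega>. ennreal (exp (lam * (M \<omega> + (\<Sum>s\<in>S. F \<omega> s (\<omega> (Suc m, s)))))) \<partial>samples S P (Suc m))
           \<le> (\<integral>\<^sup>+\<omega>. ennreal (exp (lam * M \<omega>)) \<partial>samples S P m) * ennreal (exp (lam\<^sup>2 * (\<Sum>s\<in>S. v s)))"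
proof -
  define R where "R = Pi_pmf ({Suc m} \<times> S) 0 (\<lambda>(t, s). P s)"
  define merge where "merge = (\<lambda>(f::nat \<times> nat \<Rightarrow> nat, g::nat \<times> nat \<Rightarrow> nat) x.
                                  if x \<in> {1..m} \<times> S then f x else g x)"
  define G where "G = (\<lambda>f g. \<Sum>s\<in>S. F f s (g (Suc m, s)))"
  have merge: "M (merge (f, g)) = M f \<and> (\<Sum>s\<in>S. F (merge (f, g)) s (merge (f, g) (Suc m, s))) = G f g"
    if f: "f \<in> set_pmf (samples S P m)" and g: "g \<in> set_pmf R" for f g
  proof -
    have "set_pmf R \<subseteq> {g. \<forall>x. x \<notin> {Suc m} \<times> S \<longrightarrow> g x = 0}"
      unfolding R_def by (rule set_Pi_pmf_subset) (use finS in auto)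
    then have "g x = 0" if "x \<notin> {Suc m} \<times> S" for x using g that by blast
    then have "merge (f, g) (j, y) = f (j, y)" if "j \<le> m" for j y
      using samples_eq_0[OF finS f, of "(j, y)"] that unfolding merge_def by auto
    then have "M (merge (f, g)) = M f" and "F (merge (f, g)) = F f"
      by (blast intro: M_adapted F_adapted)+
    then show ?thesis unfolding G_def merge_def by simp
  qed
  have "(\<integral>\<^sup>+\<omega>. ennreal (exp (lam * (M \<omega> + (\<Sum>s\<in>S. F \<omega> s (\<omega> (Suc m, s)))))) \<partial>samples S P (Suc m))
          = (\<integral>\<^sup>+f. \<integral>\<^sup>+g. ennreal (exp (lam * (M (merge (f, g))
                 + (\<Sum>s\<in>S. F (merge (f, g)) s (merge (f, g) (Suc m, s)))))) \<partial>R \<partial>samples S P m)"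
    unfolding samples_Suc[OF finS] nn_integral_map_pmf nn_integral_pair_pmf' merge_def R_def by simp
  also have "\<dots> = (\<integral>\<^sup>+f. ennreal (exp (lam * M f)) * (\<integral>\<^sup>+g. ennreal (exp (lam * G f g)) \<partial>R)
                      \<partial>samples S P m)"
  proof (intro nn_integral_cong_AE AE_pmfI)
    fix f assume f: "f \<in> set_pmf (samples S P m)"
    have "(\<integral>\<^sup>+g. ennreal (exp (lam * (M (merge (f, g))
             + (\<Sum>s\<in>S. F (merge (f, g)) s (merge (f, g) (Suc m, s)))))) \<partial>R)
            = (\<integral>\<^sup>+g. ennreal (exp (lam * M f)) * ennreal (exp (lam * G f g)) \<partial>R)"
      by (intro nn_integral_cong_AE AE_pmfI) (simp add: merge[OF f] distrib_left exp_add ennreal_mult')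
    then show "(\<integral>\<^sup>+g. ennreal (exp (lam * (M (merge (f, g))
                 + (\<Sum>s\<in>S. F (merge (f, g)) s (merge (f, g) (Suc m, s)))))) \<partial>R)
                 = ennreal (exp (lam * M f)) * (\<integral>\<^sup>+g. ennreal (exp (lam * G f g)) \<partial>R)"
      by (simp add: nn_integral_cmult)
  qed
  also have "\<dots> \<le> (\<integral>\<^sup>+f. ennreal (exp (lam * M f)) * ennreal (exp (lam\<^sup>2 * (\<Sum>s\<in>S. v s))) \<partial>samples S P m)"
    unfolding G_def R_def
    by (intro nn_integral_mono mult_left_mono nn_integral_exp_sum_round_le[OF finS supp] mean bound var) auto
  also have "\<dots> = (\<integral>\<^sup>+\<omega>. ennreal (exp (lam * M \<omega>)) \<partial>samples S P m) * ennreal (exp (lam\<^sup>2 * (\<Sum>s\<in>S. v s)))"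
    by (simp add: nn_integral_multc)
  finally show ?thesis .
qed

text \<open>An Azuma-type bound: conditioning on the earlier rounds peels off one round at a time.\<close>

lemma nn_integral_exp_martingale_le:
  fixes F :: "nat \<Rightarrow> (nat \<times> nat \<Rightarrow> nat) \<Rightarrow> nat \<Rightarrow> nat \<Rightarrow> real" and v :: "nat \<Rightarrow> nat \<Rightarrow> real"
  assumes finS: "finite S" and supp: "\<And>s. s \<in> S \<Longrightarrow> set_pmf (P s) \<subseteq> S"
    and adapted: "\<And>i \<omega> \<omega>'. i \<in> {t0<..t0+d} \<Longrightarrow> (\<And>j y. j < i \<Longrightarrow> \<omega> (j, y) = \<omega>' (j, y)) \<Longrightarrow>
                    F i \<omega> = F i \<omega>'"
    and mean: "\<And>i \<omega> s. i \<in> {t0<..t0+d} \<Longrightarrow> s \<in> S \<Longrightarrow>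
                 measure_pmf.expectation (P s) (F i \<omega> s) = 0"
    and bound: "\<And>i \<omega> s x. i \<in> {t0<..t0+d} \<Longrightarrow> s \<in> S \<Longrightarrow> x \<in> set_pmf (P s) \<Longrightarrow>
                  \<bar>lam * F i \<omega> s x\<bar> \<le> 1"
    and var: "\<And>i \<omega> s. i \<in> {t0<..t0+d} \<Longrightarrow> s \<in> S \<Longrightarrow>
                measure_pmf.expectation (P s) (\<lambda>x. (F i \<omega> s x)\<^sup>2) \<le> v i s"
  shows "(\<integral>\<^sup>+\<omega>. ennreal (exp (lam * (\<Sum>i\<in>{t0<..t0+d}. \<Sum>s\<in>S. F i \<omega> s (\<omega> (i, s)))))
            \<partial>samples S P (t0 + d))
         \<le> ennreal (exp (lam\<^sup>2 * (\<Sum>i\<in>{t0<..t0+d}. \<Sum>s\<in>S. v i s)))"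
proof -
  define Z where "Z = (\<lambda>m \<omega>. \<Sum>i\<in>{t0<..m}. \<Sum>s\<in>S. F i \<omega> s (\<omega> (i, s)))"
  define C where "C = (\<lambda>m. \<Sum>i\<in>{t0<..m}. \<Sum>s\<in>S. v i s)"
  have "(\<integral>\<^sup>+\<omega>. ennreal (exp (lam * Z (t0 + e) \<omega>)) \<partial>samples S P (t0 + e))
          \<le> ennreal (exp (lam\<^sup>2 * C (t0 + e)))" if "e \<le> d" for e
    using that
  proof (induction e)
    case 0
    then show ?case by (simp add: Z_def C_def measure_pmf.emeasure_space_1)
  next
    case (Suc e)
    define m where "m = t0 + e"
    have split: "{t0<..Suc m} = insert (Suc m) {t0<..m}" by (auto simp: m_def)
    have Suc_m: "Suc m \<in> {t0<..t0+d}" using Suc.prems by (simp add: m_def)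
    have Z_Suc: "Z (Suc m) \<omega> = Z m \<omega> + (\<Sum>s\<in>S. F (Suc m) \<omega> s (\<omega> (Suc m, s)))" for \<omega>
      unfolding Z_def split by (subst sum.insert) auto
    have "(\<integral>\<^sup>+\<omega>. ennreal (exp (lam * Z (Suc m) \<omega>)) \<partial>samples S P (Suc m))
            \<le> (\<integral>\<^sup>+\<omega>. ennreal (exp (lam * Z m \<omega>)) \<partial>samples S P m)
                * ennreal (exp (lam\<^sup>2 * (\<Sum>s\<in>S. v (Suc m) s)))"
      unfolding Z_Suc
    proof (rule nn_integral_exp_samples_Suc_le[OF finS supp])
      fix \<omega> \<omega>' :: "nat \<times> nat \<Rightarrow> nat"
      assume agree: "\<And>j y. j \<le> m \<Longrightarrow> \<omega> (j, y) = \<omega>' (j, y)"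
      have F_eq: "F i \<omega> = F i \<omega>'" if i: "i \<in> {t0<..Suc m}" for i
      proof (rule adapted)
        show "i \<in> {t0<..t0+d}" using i Suc.prems by (auto simp: m_def)
        show "\<omega> (j, y) = \<omega>' (j, y)" if "j < i" for j y using agree[of j y] that i by simp
      qed
      then show "Z m \<omega> = Z m \<omega>'" unfolding Z_def using agree by (auto intro!: sum.cong)
      show "F (Suc m) \<omega> = F (Suc m) \<omega>'" by (rule F_eq) (simp add: m_def)
    qed (use Suc_m mean bound var in auto)
    also have "\<dots> \<le> ennreal (exp (lam\<^sup>2 * C m)) * ennreal (exp (lam\<^sup>2 * (\<Sum>s\<in>S. v (Suc m) s)))"
      using Suc by (intro mult_right_mono) (auto simp: m_def)
    also have "\<dots> = ennreal (exp (lam\<^sup>2 * C (Suc m)))"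
      unfolding C_def split by (subst sum.insert) (auto simp: distrib_left exp_add ennreal_mult' mult.commute)
    finally show ?case by (simp add: m_def)
  qed
  then show ?thesis unfolding Z_def C_def by simp
qed

section \<open>The value function and the TD iterates\<close>

lemma convex_comb_bounds:
  fixes a b x y \<eta> :: real
  assumes "0 \<le> \<eta>" "\<eta> \<le> 1" "a \<le> x" "x \<le> b" "a \<le> y" "y \<le> b"
  shows "a \<le> (1 - \<eta>) * x + \<eta> * y \<and> (1 - \<eta>) * x + \<eta> * y \<le> b"
proof -
  have "(1 - \<eta>) * a + \<eta> * a \<le> (1 - \<eta>) * x + \<eta> * y"
    using assms by (intro add_mono mult_left_mono) auto
  moreover have "(1 - \<eta>) * x + \<eta> * y \<le> (1 - \<eta>) * b + \<eta> * b"
    using assms by (intro add_mono mult_left_mono) auto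
  ultimately show ?thesis by (simp add: algebra_simps)
qed

locale td_setting =
  fixes S :: "nat set" and P :: "nat \<Rightarrow> nat pmf" and r :: "nat \<Rightarrow> real" and \<gamma> :: real
    and \<eta> :: "nat \<Rightarrow> real" and V0 :: "nat \<Rightarrow> real" and T :: nat
  assumes finS: "finite S" and supp: "\<And>s. s \<in> S \<Longrightarrow> set_pmf (P s) \<subseteq> S"
    and r01: "\<And>s. s \<in> S \<Longrightarrow> 0 \<le> r s \<and> r s \<le> 1"
    and \<gamma>_pos: "0 < \<gamma>" and \<gamma>_less_1: "\<gamma> < 1"
    and \<eta>01: "\<And>t. t \<le> T \<Longrightarrow> 0 < \<eta> t \<and> \<eta> t \<le> 1"
    and V0_bounds: "\<And>s. s \<in> S \<Longrightarrow> 0 \<le> V0 s \<and> V0 s \<le> 1 / (1 - \<gamma>)"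
begin

definition PV :: "(nat \<Rightarrow> real) \<Rightarrow> nat \<Rightarrow> real" where
  "PV v s = (\<Sum>x\<in>S. pmf (P s) x * v x)"

lemma PV_add: "PV (\<lambda>x. u x + v x) s = PV u s + PV v s"
  unfolding PV_def by (simp add: sum.distrib algebra_simps)

lemma PV_diff: "PV (\<lambda>x. u x - v x) s = PV u s - PV v s"
  unfolding PV_def by (simp add: sum_subtractf algebra_simps)

lemma PV_cmult: "PV (\<lambda>x. a * u x) s = a * PV u s"
  unfolding PV_def by (simp add: sum_distrib_left algebra_simps)

lemma PV_sum: "PV (\<lambda>x. \<Sum>i\<in>I. f i x) s = (\<Sum>i\<in>I. PV (f i) s)"
  unfolding PV_def by (simp add: sum_distrib_left, rule sum.swap)

lemma PV_cong: "(\<And>x. x \<in> S \<Longrightarrow> u x = v x) \<Longrightarrow> PV u s = PV v s"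
  unfolding PV_def by (intro sum.cong) auto

lemma PV_mono: "(\<And>x. x \<in> S \<Longrightarrow> u x \<le> v x) \<Longrightarrow> PV u s \<le> PV v s"
  unfolding PV_def by (intro sum_mono mult_left_mono) auto

lemma sum_pmf_P: "s \<in> S \<Longrightarrow> (\<Sum>x\<in>S. pmf (P s) x) = 1"
  using sum_pmf_eq_1[OF finS supp] by auto

lemma PV_const: "s \<in> S \<Longrightarrow> PV (\<lambda>_. c) s = c"
  unfolding PV_def using sum_pmf_P by (simp add: sum_distrib_right[symmetric])

lemma PV_bounds:
  "s \<in> S \<Longrightarrow> (\<And>x. x \<in> S \<Longrightarrow> a \<le> v x \<and> v x \<le> b) \<Longrightarrow> a \<le> PV v s \<and> PV v s \<le> b"
  using PV_mono[of "\<lambda>_. a" v s] PV_mono[of v "\<lambda>_. b" s] PV_const by auto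

lemma expectation_eq_PV: "s \<in> S \<Longrightarrow> measure_pmf.expectation (P s) f = PV f s"
  unfolding PV_def
  by (subst integral_measure_pmf_real[OF finS]) (use supp in \<open>auto simp: mult.commute\<close>)

lemma PV_centred_square:
  "s \<in> S \<Longrightarrow> PV (\<lambda>x. (u x - PV u s)\<^sup>2) s = PV (\<lambda>x. (u x)\<^sup>2) s - (PV u s)\<^sup>2"
proof -
  assume s: "s \<in> S"
  have "PV (\<lambda>x. (u x - PV u s)\<^sup>2) s = PV (\<lambda>x. (u x)\<^sup>2 + (- 2 * PV u s) * u x + (PV u s)\<^sup>2) s"
    by (rule PV_cong) (simp add: power2_eq_square algebra_simps)
  also have "\<dots> = PV (\<lambda>x. (u x)\<^sup>2) s - (PV u s)\<^sup>2"
    by (simp only: PV_add PV_cmult PV_const[OF s]) (simp add: power2_eq_square)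
  finally show ?thesis .
qed

abbreviation Vs :: "nat \<Rightarrow> real" where
  "Vs \<equiv> Vstar P r \<gamma>"

lemma kstep_in_S: "s \<in> S \<Longrightarrow> set_pmf (kstep P k s) \<subseteq> S"
  by (induction k) (use supp in \<open>auto simp: set_bind_pmf\<close>)

lemma kstep_Suc_first: "kstep P (Suc k) s = bind_pmf (P s) (kstep P k)"
proof (induction k arbitrary: s)
  case 0
  then show ?case by (simp add: bind_return_pmf bind_return_pmf')
next
  case (Suc k)
  then show ?case by (simp add: bind_assoc_pmf)
qed

definition expected_reward :: "nat \<Rightarrow> nat \<Rightarrow> real" where
  "expected_reward k s = measure_pmf.expectation (kstep P k s) r"

lemma expected_reward_eq_sum:
  "s \<in> S \<Longrightarrow> expected_reward k s = (\<Sum>y\<in>S. r y * pmf (kstep P k s) y)"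
  unfolding expected_reward_def
  by (rule integral_measure_pmf_real[OF finS]) (use kstep_in_S in auto)

lemma expected_reward_bounds: "s \<in> S \<Longrightarrow> 0 \<le> expected_reward k s \<and> expected_reward k s \<le> 1"
proof -
  assume s: "s \<in> S"
  have "(\<Sum>y\<in>S. r y * pmf (kstep P k s) y) \<le> (\<Sum>y\<in>S. 1 * pmf (kstep P k s) y)"
    using r01 by (intro sum_mono mult_right_mono) auto
  also have "\<dots> = 1" using sum_pmf_eq_1[OF finS kstep_in_S[OF s]] by simp
  finally show ?thesis using expected_reward_eq_sum[OF s] r01 by (auto intro!: sum_nonneg)
qed

lemma expected_reward_Suc: "s \<in> S \<Longrightarrow> expected_reward (Suc k) s = PV (expected_reward k) s"
proof -
  assume s: "s \<in> S"
  have "expected_reward (Suc k) s = (\<Sum>y\<in>S. r y * (\<Sum>x\<in>S. pmf (kstep P k x) y * pmf (P s) x))"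
    unfolding expected_reward_eq_sum[OF s] kstep_Suc_first pmf_bind
    by (intro sum.cong refl arg_cong2[where f="(*)"] integral_measure_pmf_real[OF finS])
       (use supp s in auto)
  also have "\<dots> = (\<Sum>x\<in>S. pmf (P s) x * (\<Sum>y\<in>S. r y * pmf (kstep P k x) y))"
    by (simp add: sum_distrib_left mult_ac, rule sum.swap)
  also have "\<dots> = PV (expected_reward k) s"
    unfolding PV_def by (intro sum.cong refl) (simp add: expected_reward_eq_sum)
  finally show ?thesis .
qed

lemma Vs_eq_suminf: "Vs s = (\<Sum>k. \<gamma> ^ k * expected_reward k s)"
  unfolding Vstar_def expected_reward_def ..

lemma summable_discounted_reward: "s \<in> S \<Longrightarrow> summable (\<lambda>k. \<gamma> ^ k * expected_reward k s)"
  by (rule summable_comparison_test'[OF summable_geometric[of \<gamma>]])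
     (use \<gamma>_pos \<gamma>_less_1 expected_reward_bounds in \<open>auto simp: abs_mult intro!: mult_left_le\<close>)

lemma Vs_bounds: "s \<in> S \<Longrightarrow> 0 \<le> Vs s \<and> Vs s \<le> 1 / (1 - \<gamma>)"
proof -
  assume s: "s \<in> S"
  have "0 \<le> Vs s" unfolding Vs_eq_suminf
    by (rule suminf_nonneg[OF summable_discounted_reward[OF s]])
       (use expected_reward_bounds[OF s] \<gamma>_pos in auto)
  moreover have "Vs s \<le> (\<Sum>k. \<gamma> ^ k)" unfolding Vs_eq_suminf
    by (rule suminf_le[OF _ summable_discounted_reward[OF s]])
       (use expected_reward_bounds[OF s] \<gamma>_pos \<gamma>_less_1 in \<open>auto intro!: mult_left_le\<close>)
  ultimately show ?thesis using suminf_geometric[of \<gamma>] \<gamma>_pos \<gamma>_less_1 by simp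
qed

lemma Vs_bellman: "s \<in> S \<Longrightarrow> Vs s = r s + \<gamma> * PV Vs s"
proof -
  assume s: "s \<in> S"
  note summable = summable_discounted_reward
  have "Vs s = (\<Sum>k. \<gamma> ^ Suc k * expected_reward (Suc k) s) + r s"
    unfolding Vs_eq_suminf using suminf_split_head[OF summable[OF s]]
    by (simp add: expected_reward_def)
  also have "(\<Sum>k. \<gamma> ^ Suc k * expected_reward (Suc k) s)
               = (\<Sum>k. \<gamma> * (\<Sum>x\<in>S. pmf (P s) x * (\<gamma> ^ k * expected_reward k x)))"
    by (intro suminf_cong) (simp add: expected_reward_Suc[OF s] PV_def sum_distrib_left algebra_simps)
  also have "\<dots> = \<gamma> * (\<Sum>x\<in>S. \<Sum>k. pmf (P s) x * (\<gamma> ^ k * expected_reward k x))"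
    using summable supp s
    by (subst suminf_sum[symmetric]) (auto intro!: suminf_mult summable_sum summable_mult)
  also have "\<dots> = \<gamma> * PV Vs s"
    unfolding PV_def Vs_eq_suminf using summable by (simp add: suminf_mult)
  finally show ?thesis by simp
qed

abbreviation V :: "(nat \<times> nat \<Rightarrow> nat) \<Rightarrow> nat \<Rightarrow> nat \<Rightarrow> real" where
  "V \<omega> t s \<equiv> td r \<gamma> \<eta> V0 \<omega> t s"

definition samples_in_S :: "(nat \<times> nat \<Rightarrow> nat) \<Rightarrow> nat \<Rightarrow> bool" where
  "samples_in_S \<omega> t \<longleftrightarrow> (\<forall>j\<in>{1..t}. \<forall>y\<in>S. \<omega> (j, y) \<in> S)"

lemma samples_in_S_mono: "samples_in_S \<omega> t \<Longrightarrow> i \<le> t \<Longrightarrow> samples_in_S \<omega> i"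
  unfolding samples_in_S_def by auto

lemma samples_in_S_of_set_pmf: "\<omega> \<in> set_pmf (samples S P T) \<Longrightarrow> samples_in_S \<omega> T"
  unfolding samples_in_S_def using samples_in_set_pmf[OF finS] supp by blast

lemma V_bounds:
  "samples_in_S \<omega> t \<Longrightarrow> t \<le> T \<Longrightarrow> s \<in> S \<Longrightarrow> 0 \<le> V \<omega> t s \<and> V \<omega> t s \<le> 1 / (1 - \<gamma>)"
proof (induction t arbitrary: s)
  case 0
  then show ?case using V0_bounds by simp
next
  case (Suc t)
  have IH: "0 \<le> V \<omega> t x \<and> V \<omega> t x \<le> 1 / (1 - \<gamma>)" if "x \<in> S" for x
    using Suc samples_in_S_mono[OF Suc.prems(1)] that by simp
  have "\<omega> (Suc t, s) \<in> S" using Suc.prems unfolding samples_in_S_def by auto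
  note next_bounds = IH[OF this]
  have "0 \<le> r s + \<gamma> * V \<omega> t (\<omega> (Suc t, s))"
    using next_bounds r01[OF Suc.prems(3)] \<gamma>_pos by simp
  moreover have "r s + \<gamma> * V \<omega> t (\<omega> (Suc t, s)) \<le> 1 + \<gamma> * (1 / (1 - \<gamma>))"
    using next_bounds r01[OF Suc.prems(3)] \<gamma>_pos by (intro add_mono mult_left_mono) auto
  moreover have "1 + \<gamma> * (1 / (1 - \<gamma>)) = 1 / (1 - \<gamma>)" using \<gamma>_less_1 by (simp add: field_simps)
  ultimately show ?case
    using convex_comb_bounds[of "\<eta> (Suc t)" 0 "V \<omega> t s" "1 / (1 - \<gamma>)"] IH[OF Suc.prems(3)]
      \<eta>01[OF Suc.prems(2)] by simp
qed

subsection \<open>Propagation of errors\<close>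

text \<open>The linear part \<open>A\<^sub>j = (1 - \<eta> j) I + \<eta> j \<gamma> P\<close> of the expected TD update; since \<open>V\<^sup>\<star>\<close> is a
  fixed point of the expected update, the errors evolve under \<open>A\<^sub>j\<close> plus noise.\<close>

definition update :: "nat \<Rightarrow> (nat \<Rightarrow> real) \<Rightarrow> nat \<Rightarrow> real" where
  "update j u s = (1 - \<eta> j) * u s + \<eta> j * \<gamma> * PV u s"

lemma update_add: "update j (\<lambda>x. u x + v x) s = update j u s + update j v s"
  unfolding update_def PV_add by (simp add: algebra_simps)

lemma update_cmult: "update j (\<lambda>x. a * u x) s = a * update j u s"
  unfolding update_def PV_cmult by (simp add: algebra_simps)

lemma update_sum: "update j (\<lambda>x. \<Sum>i\<in>I. f i x) s = (\<Sum>i\<in>I. update j (f i) s)"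
  by (simp add: update_def PV_sum sum.distrib sum_distrib_left)

lemma update_cong: "(\<And>x. x \<in> S \<Longrightarrow> u x = v x) \<Longrightarrow> s \<in> S \<Longrightarrow> update j u s = update j v s"
  unfolding update_def using PV_cong[of u v] by simp

lemma update_mono:
  "(\<And>x. x \<in> S \<Longrightarrow> u x \<le> v x) \<Longrightarrow> s \<in> S \<Longrightarrow> j \<le> T \<Longrightarrow> update j u s \<le> update j v s"
  unfolding update_def using \<eta>01[of j] \<gamma>_pos PV_mono[of u v s]
  by (intro add_mono mult_left_mono) auto

lemma update_const: "s \<in> S \<Longrightarrow> update j (\<lambda>_. c) s = (1 - \<eta> j * (1 - \<gamma>)) * c"
  unfolding update_def PV_const by (simp add: algebra_simps)

primrec Wapp :: "nat \<Rightarrow> nat \<Rightarrow> (nat \<Rightarrow> real) \<Rightarrow> nat \<Rightarrow> real" where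
  "Wapp i 0 v = v"
| "Wapp i (Suc n) v = update (i + Suc n) (Wapp i n v)"

lemma Wapp_Suc_diff: "i \<le> t \<Longrightarrow> Wapp i (Suc t - i) v = update (Suc t) (Wapp i (t - i) v)"
  by (simp add: Suc_diff_le)

lemma Wapp_cmult: "Wapp i n (\<lambda>x. a * u x) = (\<lambda>s. a * Wapp i n u s)"
  by (induction n) (auto simp: update_cmult)

lemma Wapp_sum: "Wapp i n (\<lambda>x. \<Sum>j\<in>J. f j x) = (\<lambda>s. \<Sum>j\<in>J. Wapp i n (f j) s)"
  by (induction n) (auto simp: update_sum)

lemma Wapp_cong: "(\<And>x. x \<in> S \<Longrightarrow> u x = v x) \<Longrightarrow> s \<in> S \<Longrightarrow> Wapp i n u s = Wapp i n v s"
proof (induction n arbitrary: s)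
  case (Suc n)
  then show ?case by (simp only: Wapp.simps) (rule update_cong, blast)
qed simp

lemma Wapp_mono:
  "(\<And>x. x \<in> S \<Longrightarrow> u x \<le> v x) \<Longrightarrow> s \<in> S \<Longrightarrow> i + n \<le> T \<Longrightarrow> Wapp i n u s \<le> Wapp i n v s"
proof (induction n arbitrary: s)
  case (Suc n)
  then show ?case by (simp only: Wapp.simps) (rule update_mono, auto)
qed simp

definition damping :: "nat \<Rightarrow> nat \<Rightarrow> real" where
  "damping i n = (\<Prod>j\<in>{i<..i+n}. 1 - \<eta> j * (1 - \<gamma>))"

lemma damping_Suc: "damping i (Suc n) = (1 - \<eta> (i + Suc n) * (1 - \<gamma>)) * damping i n"
proof -
  have "{i<..i + Suc n} = insert (i + Suc n) {i<..i+n}" by auto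
  then show ?thesis unfolding damping_def by simp
qed

lemma damping_factor_bounds: "j \<le> T \<Longrightarrow> 0 \<le> 1 - \<eta> j * (1 - \<gamma>) \<and> 1 - \<eta> j * (1 - \<gamma>) \<le> 1"
proof -
  assume "j \<le> T"
  then have \<eta>: "0 < \<eta> j" "\<eta> j \<le> 1" using \<eta>01 by auto
  have "\<eta> j * (1 - \<gamma>) \<le> 1 * 1" using \<eta> \<gamma>_pos \<gamma>_less_1 by (intro mult_mono) auto
  moreover have "0 \<le> \<eta> j * (1 - \<gamma>)" using \<eta> \<gamma>_less_1 by simp
  ultimately show ?thesis by simp
qed

lemma damping_bounds: "i + n \<le> T \<Longrightarrow> 0 \<le> damping i n \<and> damping i n \<le> 1"
  unfolding damping_def using damping_factor_bounds by (auto intro: prod_nonneg prod_le_1)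

lemma damping_le_exp:
  assumes "i + n \<le> T" and "\<And>j. j \<le> T \<Longrightarrow> lo \<le> \<eta> j"
  shows "damping i n \<le> exp (- (lo * (1 - \<gamma>) * n))"
proof -
  have "damping i n \<le> (\<Prod>j\<in>{i<..i+n}. exp (- (lo * (1 - \<gamma>))))"
    unfolding damping_def
  proof (rule prod_mono)
    fix j assume j: "j \<in> {i<..i+n}"
    have "lo * (1 - \<gamma>) \<le> \<eta> j * (1 - \<gamma>)" using assms j \<gamma>_less_1 by (intro mult_right_mono) auto
    then show "0 \<le> 1 - \<eta> j * (1 - \<gamma>) \<and> 1 - \<eta> j * (1 - \<gamma>) \<le> exp (- (lo * (1 - \<gamma>)))"
      using damping_factor_bounds[of j] exp_ge_add_one_self[of "- (lo * (1 - \<gamma>))"] assms(1) j by auto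
  qed
  also have "\<dots> = exp (- (lo * (1 - \<gamma>))) ^ n" by simp
  also have "\<dots> = exp (- (lo * (1 - \<gamma>) * n))" by (simp add: exp_of_nat_mult[symmetric] mult.commute)
  finally show ?thesis .
qed

lemma Wapp_const: "s \<in> S \<Longrightarrow> Wapp i n (\<lambda>_. c) s = damping i n * c"
proof (induction n arbitrary: s)
  case 0
  then show ?case by (simp add: damping_def)
next
  case (Suc n)
  then have "Wapp i (Suc n) (\<lambda>_. c) s = update (i + Suc n) (\<lambda>_. damping i n * c) s"
    by (simp only: Wapp.simps) (rule update_cong, auto)
  then show ?case using Suc.prems by (simp add: update_const damping_Suc)
qed

lemma Wapp_abs_le:
  assumes "s \<in> S" "i + n \<le> T" "\<And>x. x \<in> S \<Longrightarrow> \<bar>v x\<bar> \<le> B"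
  shows "\<bar>Wapp i n v s\<bar> \<le> damping i n * B"
proof -
  have "- B \<le> v x \<and> v x \<le> B" if "x \<in> S" for x using assms(3)[OF that] by linarith
  then have "Wapp i n (\<lambda>_. - B) s \<le> Wapp i n v s" "Wapp i n v s \<le> Wapp i n (\<lambda>_. B) s"
    using assms(1,2) by (auto intro!: Wapp_mono)
  then show ?thesis using assms(1) by (simp add: Wapp_const abs_le_iff)
qed

definition W :: "nat \<Rightarrow> nat \<Rightarrow> nat \<Rightarrow> nat \<Rightarrow> real" where
  "W i n s s' = Wapp i n (\<lambda>x. if x = s' then 1 else 0) s"

lemma Wapp_eq_sum_W: "s \<in> S \<Longrightarrow> Wapp i n v s = (\<Sum>s'\<in>S. W i n s s' * v s')"
proof -
  assume s: "s \<in> S"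
  have "(\<Sum>s'\<in>S. v s' * (if x = s' then 1 else 0)) = v x" if "x \<in> S" for x
  proof -
    have "(\<Sum>s'\<in>S. v s' * (if x = s' then 1 else 0)) = (\<Sum>s'\<in>S. if x = s' then v s' else 0)"
      by (rule sum.cong) auto
    then show ?thesis using finS that by simp
  qed
  then have "Wapp i n v s = Wapp i n (\<lambda>x. \<Sum>s'\<in>S. v s' * (if x = s' then 1 else 0)) s"
    using s by (intro Wapp_cong) auto
  then show ?thesis unfolding Wapp_sum Wapp_cmult W_def by (simp add: mult.commute)
qed

lemma W_nonneg: "s \<in> S \<Longrightarrow> i + n \<le> T \<Longrightarrow> 0 \<le> W i n s s'"
  using Wapp_mono[of "\<lambda>_. 0" "\<lambda>x. if x = s' then 1 else 0" s i n] by (simp add: W_def Wapp_const)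

lemma W_rowsum: "s \<in> S \<Longrightarrow> (\<Sum>s'\<in>S. W i n s s') = damping i n"
  using Wapp_eq_sum_W[of s i n "\<lambda>_. 1"] Wapp_const[of s i n 1] by simp

lemma W_le_1: "s \<in> S \<Longrightarrow> s' \<in> S \<Longrightarrow> i + n \<le> T \<Longrightarrow> W i n s s' \<le> 1"
proof -
  assume s: "s \<in> S" "s' \<in> S" "i + n \<le> T"
  then have "W i n s s' \<le> (\<Sum>s''\<in>S. W i n s s'')" using finS W_nonneg by (intro member_le_sum) auto
  then show ?thesis using W_rowsum[OF s(1)] damping_bounds[OF s(3)] by simp
qed

lemma Wapp_duhamel:
  assumes step: "\<And>t x. x \<in> S \<Longrightarrow> u (Suc t) x = update (Suc t) (u t) x + \<eta> (Suc t) * g (Suc t) x"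
  shows "s \<in> S \<Longrightarrow>
           u (t0 + n) s = Wapp t0 n (u t0) s + (\<Sum>i\<in>{t0<..t0+n}. \<eta> i * Wapp i (t0 + n - i) (g i) s)"
proof (induction n arbitrary: s)
  case 0
  then show ?case by simp
next
  case (Suc n)
  define k where "k = Suc (t0 + n)"
  have "u k s = update k (u (t0 + n)) s + \<eta> k * g k s" using step Suc.prems by (simp add: k_def)
  also have "update k (u (t0 + n)) s = update k (\<lambda>x. Wapp t0 n (u t0) x
                 + (\<Sum>i\<in>{t0<..t0+n}. \<eta> i * Wapp i (t0 + n - i) (g i) x)) s"
    using Suc by (intro update_cong) auto
  also have "\<dots> = Wapp t0 (Suc n) (u t0) s + (\<Sum>i\<in>{t0<..t0+n}. \<eta> i * Wapp i (k - i) (g i) s)"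
    unfolding update_add update_sum update_cmult k_def by (simp add: Wapp_Suc_diff)
  also have "\<eta> k * g k s = \<eta> k * Wapp k (k - k) (g k) s" by simp
  moreover have "{t0<..t0 + Suc n} = insert k {t0<..t0+n}" by (auto simp: k_def)
  ultimately show ?case by (simp add: k_def)
qed

lemma Wapp_telescope:
  "s \<in> S \<Longrightarrow> (\<Sum>i\<in>{t0<..t0+n}. \<eta> i * Wapp i (t0 + n - i) (\<lambda>x. y x - \<gamma> * PV y x) s)
                = y s - Wapp t0 n y s"
  using Wapp_duhamel[of "\<lambda>_. y" "\<lambda>_ x. y x - \<gamma> * PV y x" s t0 n]
  by (simp add: update_def algebra_simps)

lemma sum_eta_Wapp_1_le:
  assumes "s \<in> S" "t0 + n \<le> T"
  shows "(\<Sum>i\<in>{t0<..t0+n}. \<eta> i * Wapp i (t0 + n - i) (\<lambda>_. 1) s) \<le> 1 / (1 - \<gamma>)"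
proof -
  define y where "y = (\<lambda>_::nat. 1 / (1 - \<gamma>))"
  have "Wapp i m (\<lambda>_. 1) s = Wapp i m (\<lambda>x. y x - \<gamma> * PV y x) s" for i m
    using assms(1) \<gamma>_less_1 by (intro Wapp_cong) (auto simp: y_def PV_const field_simps)
  then have "(\<Sum>i\<in>{t0<..t0+n}. \<eta> i * Wapp i (t0 + n - i) (\<lambda>_. 1) s) = y s - Wapp t0 n y s"
    using Wapp_telescope[OF assms(1)] by simp
  also have "\<dots> \<le> 1 / (1 - \<gamma>)"
    using Wapp_const[OF assms(1)] damping_bounds[OF assms(2)] \<gamma>_less_1 by (simp add: y_def)
  finally show ?thesis .
qed

definition err :: "(nat \<times> nat \<Rightarrow> nat) \<Rightarrow> nat \<Rightarrow> nat \<Rightarrow> real" where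
  "err \<omega> t s = V \<omega> t s - Vs s"

definition noise :: "(nat \<times> nat \<Rightarrow> nat) \<Rightarrow> nat \<Rightarrow> nat \<Rightarrow> real" where
  "noise \<omega> i s = V \<omega> (i - 1) (\<omega> (i, s)) - PV (V \<omega> (i - 1)) s"

lemma err_Suc:
  "s \<in> S \<Longrightarrow> err \<omega> (Suc t) s = update (Suc t) (err \<omega> t) s + \<eta> (Suc t) * (\<gamma> * noise \<omega> (Suc t) s)"
  using Vs_bellman[of s] unfolding err_def noise_def update_def PV_diff by (simp add: algebra_simps)

lemma err_decomp:
  "s \<in> S \<Longrightarrow> err \<omega> (t0 + n) s = Wapp t0 n (err \<omega> t0) s
     + (\<Sum>i\<in>{t0<..t0+n}. \<eta> i * Wapp i (t0 + n - i) (\<lambda>x. \<gamma> * noise \<omega> i x) s)"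
  by (rule Wapp_duhamel) (rule err_Suc)

lemma err_bounds: "samples_in_S \<omega> t \<Longrightarrow> t \<le> T \<Longrightarrow> s \<in> S \<Longrightarrow> \<bar>err \<omega> t s\<bar> \<le> 1 / (1 - \<gamma>)"
  using V_bounds[of \<omega> t s] Vs_bounds[of s] unfolding err_def by (simp add: abs_le_iff)

definition var_Vs :: "nat \<Rightarrow> real" where
  "var_Vs s = PV (\<lambda>x. (Vs x)\<^sup>2) s - (PV Vs s)\<^sup>2"

lemma var_Vs_nonneg: "s \<in> S \<Longrightarrow> 0 \<le> var_Vs s"
  using PV_centred_square[of s Vs] PV_mono[of "\<lambda>_. 0" "\<lambda>x. (Vs x - PV Vs s)\<^sup>2" s] PV_const[of s 0]
  unfolding var_Vs_def by simp

lemma discounted_var_Vs_le: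
  assumes s: "s \<in> S"
  shows "\<gamma>\<^sup>2 * var_Vs s \<le> 2 * Vs s - ((Vs s)\<^sup>2 - \<gamma> * PV (\<lambda>x. (Vs x)\<^sup>2) s)"
proof -
  define q where "q = PV (\<lambda>x. (Vs x)\<^sup>2) s"
  have "0 \<le> q" unfolding q_def using PV_mono[of "\<lambda>_. 0" "\<lambda>x. (Vs x)\<^sup>2" s] PV_const[OF s] by simp
  then have "\<gamma> * q \<le> q" using \<gamma>_pos \<gamma>_less_1 by (intro mult_left_le_one_le) auto
  then have "\<gamma>\<^sup>2 * q \<le> \<gamma> * q" using \<gamma>_pos by (simp add: power2_eq_square mult.assoc)
  moreover have "\<gamma>\<^sup>2 * (PV Vs s)\<^sup>2 = (Vs s)\<^sup>2 - 2 * (r s * Vs s) + (r s)\<^sup>2"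
  proof -
    have "\<gamma> * PV Vs s = Vs s - r s" using Vs_bellman[OF s] by simp
    then have "\<gamma>\<^sup>2 * (PV Vs s)\<^sup>2 = (Vs s - r s)\<^sup>2" by (simp add: power_mult_distrib[symmetric])
    then show ?thesis by (simp add: power2_eq_square algebra_simps)
  qed
  moreover have "r s * Vs s \<le> Vs s" using r01[OF s] Vs_bounds[OF s] by (simp add: mult_left_le_one_le)
  moreover have "\<gamma>\<^sup>2 * var_Vs s = \<gamma>\<^sup>2 * q - \<gamma>\<^sup>2 * (PV Vs s)\<^sup>2"
    unfolding var_Vs_def q_def by (simp add: right_diff_distrib)
  ultimately show ?thesis unfolding q_def[symmetric] using zero_le_power2[of "r s"] by linarith
qed

lemma total_variance_le:
  assumes s: "s \<in> S" and T: "t0 + n \<le> T"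
  shows "(\<Sum>i\<in>{t0<..t0+n}. \<eta> i * Wapp i (t0 + n - i) (\<lambda>x. \<gamma>\<^sup>2 * var_Vs x) s) \<le> 2 / (1 - \<gamma>)\<^sup>2"
proof -
  define y where "y = (\<lambda>x. 2 / (1 - \<gamma>)\<^sup>2 - (Vs x)\<^sup>2)"
  have y_bounds: "0 \<le> y x \<and> y x \<le> 2 / (1 - \<gamma>)\<^sup>2" if "x \<in> S" for x
  proof -
    have "(Vs x)\<^sup>2 \<le> (1 / (1 - \<gamma>))\<^sup>2" using Vs_bounds[OF that] by (intro power_mono) auto
    moreover have "1 / (1 - \<gamma>)\<^sup>2 \<le> 2 / (1 - \<gamma>)\<^sup>2" by (simp add: divide_right_mono)
    ultimately show ?thesis unfolding y_def by (simp add: power_divide)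
  qed
  have "\<gamma>\<^sup>2 * var_Vs x \<le> y x - \<gamma> * PV y x" if x: "x \<in> S" for x
  proof -
    have "2 / (1 - \<gamma>)\<^sup>2 - \<gamma> * (2 / (1 - \<gamma>)\<^sup>2) = (1 - \<gamma>) * (2 / (1 - \<gamma>)\<^sup>2)"
      by (simp only: left_diff_distrib mult_1)
    also have "\<dots> = 2 / (1 - \<gamma>)"
      using \<gamma>_less_1 by (simp add: power2_eq_square divide_simps)
    finally have "2 / (1 - \<gamma>)\<^sup>2 - \<gamma> * (2 / (1 - \<gamma>)\<^sup>2) = 2 / (1 - \<gamma>)" .
    moreover have "y x - \<gamma> * PV y x = 2 / (1 - \<gamma>)\<^sup>2 - \<gamma> * (2 / (1 - \<gamma>)\<^sup>2)
                                         - ((Vs x)\<^sup>2 - \<gamma> * PV (\<lambda>x. (Vs x)\<^sup>2) x)"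
      unfolding y_def PV_diff PV_const[OF x] by (simp add: algebra_simps)
    ultimately have "y x - \<gamma> * PV y x = 2 / (1 - \<gamma>) - ((Vs x)\<^sup>2 - \<gamma> * PV (\<lambda>x. (Vs x)\<^sup>2) x)"
      by simp
    then show ?thesis using discounted_var_Vs_le[OF x] Vs_bounds[OF x] by simp
  qed
  then have "(\<Sum>i\<in>{t0<..t0+n}. \<eta> i * Wapp i (t0 + n - i) (\<lambda>x. \<gamma>\<^sup>2 * var_Vs x) s)
               \<le> (\<Sum>i\<in>{t0<..t0+n}. \<eta> i * Wapp i (t0 + n - i) (\<lambda>x. y x - \<gamma> * PV y x) s)"
    using s T \<eta>01 by (intro sum_mono mult_left_mono Wapp_mono) (auto intro: less_imp_le)
  also have "\<dots> = y s - Wapp t0 n y s" by (rule Wapp_telescope[OF s])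
  also have "\<dots> \<le> y s"
    using Wapp_mono[of "\<lambda>_. 0" y s t0 n] Wapp_const[OF s, of t0 n 0] y_bounds s T by simp
  also have "\<dots> \<le> 2 / (1 - \<gamma>)\<^sup>2" using y_bounds[OF s] by simp
  finally show ?thesis .
qed

lemma PV_centred_square_le:
  assumes s: "s \<in> S" and B: "\<And>x. x \<in> S \<Longrightarrow> \<bar>u x - Vs x\<bar> \<le> B"
  shows "PV (\<lambda>x. (u x - PV u s)\<^sup>2) s \<le> 2 * var_Vs s + 2 * B\<^sup>2"
proof -
  define d where "d = (\<lambda>x. u x - Vs x)"
  have "PV u s = PV Vs s + PV d s" unfolding d_def PV_add[symmetric] by (rule PV_cong) simp
  have "(u x - PV u s)\<^sup>2 \<le> 2 * (Vs x - PV Vs s)\<^sup>2 + 2 * (d x - PV d s)\<^sup>2" for x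
  proof -
    have "u x - PV u s = (Vs x - PV Vs s) + (d x - PV d s)"
      using \<open>PV u s = PV Vs s + PV d s\<close> unfolding d_def by simp
    moreover have "(a + b)\<^sup>2 \<le> 2 * a\<^sup>2 + 2 * b\<^sup>2" for a b :: real
      using zero_le_power2[of "a - b"] by (simp add: power2_eq_square algebra_simps)
    ultimately show ?thesis by simp
  qed
  then have "PV (\<lambda>x. (u x - PV u s)\<^sup>2) s \<le> PV (\<lambda>x. 2 * (Vs x - PV Vs s)\<^sup>2 + 2 * (d x - PV d s)\<^sup>2) s"
    by (intro PV_mono)
  also have "\<dots> = 2 * var_Vs s + 2 * (PV (\<lambda>x. (d x)\<^sup>2) s - (PV d s)\<^sup>2)"
    unfolding PV_add PV_cmult PV_centred_square[OF s] var_Vs_def by simp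
  finally have "PV (\<lambda>x. (u x - PV u s)\<^sup>2) s \<le> 2 * var_Vs s + 2 * (PV (\<lambda>x. (d x)\<^sup>2) s - (PV d s)\<^sup>2)" .
  moreover have "PV (\<lambda>x. (d x)\<^sup>2) s \<le> B\<^sup>2"
  proof -
    have "(d x)\<^sup>2 \<le> B\<^sup>2" if "x \<in> S" for x
      using power_mono[OF B[OF that] abs_ge_zero, of 2] unfolding d_def by simp
    then show ?thesis using PV_mono[of "\<lambda>x. (d x)\<^sup>2" "\<lambda>_. B\<^sup>2" s] PV_const[OF s] by simp
  qed
  ultimately show ?thesis using zero_le_power2[of "PV d s"] by (smt (verit))
qed

subsection \<open>Concentration of the noise over a window\<close>

lemma V_eqI: "(\<And>j y. 1 \<le> j \<Longrightarrow> j \<le> t \<Longrightarrow> \<omega> (j, y) = \<omega>' (j, y)) \<Longrightarrow> V \<omega> t = V \<omega>' t"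
  by (induction t) (auto simp: fun_eq_iff)

definition err_bounded :: "(nat \<times> nat \<Rightarrow> nat) \<Rightarrow> nat \<Rightarrow> real \<Rightarrow> bool" where
  "err_bounded \<omega> i B \<longleftrightarrow> samples_in_S \<omega> i \<and> (\<forall>x\<in>S. \<bar>err \<omega> i x\<bar> \<le> B)"

lemma err_bounded_eqI:
  "(\<And>j y. 1 \<le> j \<Longrightarrow> j \<le> i \<Longrightarrow> \<omega> (j, y) = \<omega>' (j, y)) \<Longrightarrow> err_bounded \<omega> i B = err_bounded \<omega>' i B"
  using V_eqI[of i \<omega> \<omega>'] unfolding err_bounded_def samples_in_S_def err_def by auto

text \<open>The noise of round \<open>i\<close> as a function of the fresh sample \<open>y \<sim> P s'\<close>, switched off unless
  the errors before round \<open>i\<close> are bounded by \<open>B\<close>. The switch keeps the summands centred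
  (it depends on earlier rounds only) while bounding their variance unconditionally.\<close>

definition trunc_noise :: "real \<Rightarrow> (nat \<times> nat \<Rightarrow> nat) \<Rightarrow> nat \<Rightarrow> nat \<Rightarrow> nat \<Rightarrow> real" where
  "trunc_noise B \<omega> i s' y =
     (if err_bounded \<omega> (i - 1) B then V \<omega> (i - 1) y - PV (V \<omega> (i - 1)) s' else 0)"

lemma trunc_noise_eqI:
  "(\<And>j y. j < i \<Longrightarrow> \<omega> (j, y) = \<omega>' (j, y)) \<Longrightarrow> trunc_noise B \<omega> i = trunc_noise B \<omega>' i"
proof -
  assume "\<And>j y. j < i \<Longrightarrow> \<omega> (j, y) = \<omega>' (j, y)"
  then have past: "\<And>j y. 1 \<le> j \<Longrightarrow> j \<le> i - 1 \<Longrightarrow> \<omega> (j, y) = \<omega>' (j, y)" by simp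
  show ?thesis
    unfolding trunc_noise_def
    by (simp only: V_eqI[of "i - 1" \<omega> \<omega>', OF past] err_bounded_eqI[of "i - 1" \<omega> \<omega>' B, OF past])
qed

lemma PV_trunc_noise: "s' \<in> S \<Longrightarrow> PV (trunc_noise B \<omega> i s') s' = 0"
  unfolding trunc_noise_def by (cases "err_bounded \<omega> (i - 1) B") (simp_all add: PV_diff PV_const)

lemma trunc_noise_abs_le:
  assumes "s' \<in> S" "y \<in> S" "i - 1 \<le> T"
  shows "\<bar>trunc_noise B \<omega> i s' y\<bar> \<le> 1 / (1 - \<gamma>)"
proof (cases "err_bounded \<omega> (i - 1) B")
  case True
  then have V_bounds': "0 \<le> V \<omega> (i - 1) x \<and> V \<omega> (i - 1) x \<le> 1 / (1 - \<gamma>)" if "x \<in> S" for x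
    using V_bounds assms(3) that unfolding err_bounded_def by blast
  have "0 \<le> PV (V \<omega> (i - 1)) s' \<and> PV (V \<omega> (i - 1)) s' \<le> 1 / (1 - \<gamma>)"
    by (rule PV_bounds[OF assms(1) V_bounds'])
  then show ?thesis
    using V_bounds'[OF assms(2)] True unfolding trunc_noise_def by (auto simp: abs_le_iff)
qed (use \<gamma>_less_1 in \<open>simp add: trunc_noise_def\<close>)

lemma PV_trunc_noise_square_le:
  assumes "s' \<in> S" "0 \<le> B"
  shows "PV (\<lambda>y. (trunc_noise B \<omega> i s' y)\<^sup>2) s' \<le> 2 * var_Vs s' + 2 * B\<^sup>2"
proof (cases "err_bounded \<omega> (i - 1) B")
  case True
  then show ?thesis
    unfolding trunc_noise_def err_bounded_def err_def by (auto intro: PV_centred_square_le[OF assms(1)])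
next
  case False
  then show ?thesis using var_Vs_nonneg[OF assms(1)] PV_const[OF assms(1)]
    by (simp add: trunc_noise_def)
qed

definition noise_term :: "nat \<Rightarrow> nat \<Rightarrow> real \<Rightarrow> nat \<Rightarrow> (nat \<times> nat \<Rightarrow> nat) \<Rightarrow> nat \<Rightarrow> nat \<Rightarrow> real" where
  "noise_term t s B i \<omega> s' y = \<eta> i * \<gamma> * W i (t - i) s s' * trunc_noise B \<omega> i s' y"

definition noise_sum :: "nat \<Rightarrow> nat \<Rightarrow> nat \<Rightarrow> real \<Rightarrow> (nat \<times> nat \<Rightarrow> nat) \<Rightarrow> real" where
  "noise_sum t \<tau> s B \<omega> = (\<Sum>i\<in>{t-\<tau><..t}. \<Sum>s'\<in>S. noise_term t s B i \<omega> s' (\<omega> (i, s')))"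

lemma noise_term_eqI:
  "(\<And>j y. j < i \<Longrightarrow> \<omega> (j, y) = \<omega>' (j, y)) \<Longrightarrow> noise_term t s B i \<omega> = noise_term t s B i \<omega>'"
  unfolding noise_term_def by (simp only: trunc_noise_eqI[of i \<omega> \<omega>' B])

lemma PV_noise_term: "s' \<in> S \<Longrightarrow> PV (noise_term t s B i \<omega> s') s' = 0"
  unfolding noise_term_def PV_cmult PV_trunc_noise by simp

lemma noise_coeff_bounds:
  assumes "s \<in> S" "s' \<in> S" "0 < i" "i \<le> t" "t \<le> T"
  shows "0 \<le> \<eta> i * \<gamma> * W i (t - i) s s' \<and> \<eta> i * \<gamma> * W i (t - i) s s' \<le> \<eta> i"
proof -
  have W: "0 \<le> W i (t - i) s s'" "W i (t - i) s s' \<le> 1"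
    using W_nonneg[OF assms(1), of i "t - i" s'] W_le_1[OF assms(1,2), of i "t - i"] assms by auto
  have "\<gamma> * W i (t - i) s s' \<le> 1 * 1" using W \<gamma>_pos \<gamma>_less_1 by (intro mult_mono) auto
  then show ?thesis using W \<eta>01[of i] assms \<gamma>_pos
    by (auto simp: mult.assoc intro: mult_left_le[of "\<gamma> * W i (t - i) s s'" "\<eta> i", simplified])
qed

lemma noise_term_abs_le:
  assumes "s \<in> S" "s' \<in> S" "y \<in> S" "0 < i" "i \<le> t" "t \<le> T"
  shows "\<bar>noise_term t s B i \<omega> s' y\<bar> \<le> \<eta> i * (1 / (1 - \<gamma>))"
proof -
  have "\<bar>trunc_noise B \<omega> i s' y\<bar> \<le> 1 / (1 - \<gamma>)" using trunc_noise_abs_le assms by auto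
  then show ?thesis
    using noise_coeff_bounds[OF assms(1,2,4-6)] unfolding noise_term_def abs_mult
    by (intro mult_mono) auto
qed

lemma PV_noise_term_square_le:
  assumes "s' \<in> S" "0 \<le> B"
  shows "PV (\<lambda>y. (noise_term t s B i \<omega> s' y)\<^sup>2) s'
           \<le> (\<eta> i * \<gamma> * W i (t - i) s s')\<^sup>2 * (2 * var_Vs s' + 2 * B\<^sup>2)"
  unfolding noise_term_def power_mult_distrib PV_cmult
  by (intro mult_left_mono PV_trunc_noise_square_le assms) simp

lemma noise_coeff_square_sum_le:
  assumes s: "s \<in> S" and i: "0 < i" "i \<le> t" "t \<le> T" and eh: "\<eta> i \<le> eh" and B: "0 \<le> B"
  shows "(\<Sum>s'\<in>S. (\<eta> i * \<gamma> * W i (t - i) s s')\<^sup>2 * (2 * var_Vs s' + 2 * B\<^sup>2))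
           \<le> eh * (2 * (\<eta> i * Wapp i (t - i) (\<lambda>x. \<gamma>\<^sup>2 * var_Vs x) s)
                   + 2 * B\<^sup>2 * (\<eta> i * Wapp i (t - i) (\<lambda>_. 1) s))"
proof -
  have term_le: "(\<eta> i * \<gamma> * W i (t - i) s s')\<^sup>2 * (2 * var_Vs s' + 2 * B\<^sup>2)
                   \<le> eh * (2 * (\<eta> i * (W i (t - i) s s' * (\<gamma>\<^sup>2 * var_Vs s')))
                          + 2 * B\<^sup>2 * (\<eta> i * (W i (t - i) s s' * 1)))"
    if s': "s' \<in> S" for s'
  proof -
    define e where "e = \<eta> i"
    define w where "w = W i (t - i) s s'"
    have e: "0 < e" "e \<le> eh" using \<eta>01[of i] eh i unfolding e_def by auto
    have w: "0 \<le> w" "w \<le> 1" using W_nonneg[OF s] W_le_1[OF s s'] i unfolding w_def by auto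
    have X: "0 \<le> 2 * var_Vs s' + 2 * B\<^sup>2" using var_Vs_nonneg[OF s'] by simp
    have "(e * \<gamma> * w)\<^sup>2 = (e * e) * (w * w) * \<gamma>\<^sup>2" by (simp add: power2_eq_square)
    also have "\<dots> \<le> (eh * e) * (w * 1) * \<gamma>\<^sup>2"
      using e w by (intro mult_right_mono mult_mono) auto
    finally have "(e * \<gamma> * w)\<^sup>2 * (2 * var_Vs s' + 2 * B\<^sup>2)
                    \<le> (eh * e) * (w * 1) * \<gamma>\<^sup>2 * (2 * var_Vs s' + 2 * B\<^sup>2)"
      using X by (rule mult_right_mono)
    also have "\<dots> = eh * e * w * (2 * (\<gamma>\<^sup>2 * var_Vs s') + 2 * (\<gamma>\<^sup>2 * B\<^sup>2))"
      by (simp add: algebra_simps)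
    also have "\<dots> \<le> eh * e * w * (2 * (\<gamma>\<^sup>2 * var_Vs s') + 2 * (1 * B\<^sup>2))"
      using e w \<gamma>_pos \<gamma>_less_1 by (intro mult_left_mono add_left_mono mult_right_mono) (auto simp: power_le_one)
    finally show ?thesis unfolding e_def w_def by (simp add: algebra_simps)
  qed
  have "(\<Sum>s'\<in>S. (\<eta> i * \<gamma> * W i (t - i) s s')\<^sup>2 * (2 * var_Vs s' + 2 * B\<^sup>2))
          \<le> (\<Sum>s'\<in>S. eh * (2 * (\<eta> i * (W i (t - i) s s' * (\<gamma>\<^sup>2 * var_Vs s')))
                               + 2 * B\<^sup>2 * (\<eta> i * (W i (t - i) s s' * 1))))"
    using term_le by (rule sum_mono)
  also have "\<dots> = eh * (2 * (\<eta> i * (\<Sum>s'\<in>S. W i (t - i) s s' * (\<gamma>\<^sup>2 * var_Vs s')))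
                        + 2 * B\<^sup>2 * (\<eta> i * (\<Sum>s'\<in>S. W i (t - i) s s' * 1)))"
    by (simp add: sum.distrib sum_distrib_left distrib_left)
  finally show ?thesis by (simp only: Wapp_eq_sum_W[OF s])
qed

lemma noise_variance_sum_le:
  assumes s: "s \<in> S" and t: "t \<le> T" "\<tau> \<le> t"
    and eh: "0 \<le> eh" "\<And>i. t - \<tau> < i \<Longrightarrow> i \<le> t \<Longrightarrow> \<eta> i \<le> eh" and B: "0 \<le> B"
  shows "(\<Sum>i\<in>{t-\<tau><..t}. \<Sum>s'\<in>S. (\<eta> i * \<gamma> * W i (t - i) s s')\<^sup>2 * (2 * var_Vs s' + 2 * B\<^sup>2))
           \<le> eh * (4 / (1 - \<gamma>)\<^sup>2 + 2 * B\<^sup>2 / (1 - \<gamma>))"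
proof -
  define t0 where "t0 = t - \<tau>"
  have t0: "t0 + \<tau> = t" using t by (simp add: t0_def)
  have "(\<Sum>i\<in>{t0<..t}. \<Sum>s'\<in>S. (\<eta> i * \<gamma> * W i (t - i) s s')\<^sup>2 * (2 * var_Vs s' + 2 * B\<^sup>2))
          \<le> (\<Sum>i\<in>{t0<..t}. eh * (2 * (\<eta> i * Wapp i (t - i) (\<lambda>x. \<gamma>\<^sup>2 * var_Vs x) s)
                                    + 2 * B\<^sup>2 * (\<eta> i * Wapp i (t - i) (\<lambda>_. 1) s)))"
    using t eh(2) B by (intro sum_mono noise_coeff_square_sum_le[OF s]) (auto simp: t0_def)
  also have "\<dots> = eh * (2 * (\<Sum>i\<in>{t0<..t0+\<tau>}. \<eta> i * Wapp i (t0 + \<tau> - i) (\<lambda>x. \<gamma>\<^sup>2 * var_Vs x) s)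
                     + 2 * B\<^sup>2 * (\<Sum>i\<in>{t0<..t0+\<tau>}. \<eta> i * Wapp i (t0 + \<tau> - i) (\<lambda>_. 1) s))"
    unfolding t0 by (simp add: sum.distrib sum_distrib_left distrib_left)
  also have "\<dots> \<le> eh * (2 * (2 / (1 - \<gamma>)\<^sup>2) + 2 * B\<^sup>2 * (1 / (1 - \<gamma>)))"
    using total_variance_le[OF s, of t0 \<tau>] sum_eta_Wapp_1_le[OF s, of t0 \<tau>] t0 t eh B
    by (intro mult_left_mono add_mono) auto
  finally show ?thesis by (simp add: t0_def)
qed

lemma noise_sum_exp_moment_le:
  assumes s: "s \<in> S" and t: "t \<le> T" "\<tau> \<le> t" and \<sigma>: "\<bar>\<sigma>\<bar> = 1"
    and eh: "0 < eh" "\<And>i. t - \<tau> < i \<Longrightarrow> i \<le> t \<Longrightarrow> \<eta> i \<le> eh" and B: "0 \<le> B"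
    and lam: "0 \<le> lam" "lam \<le> (1 - \<gamma>) / eh"
  shows "(\<integral>\<^sup>+\<omega>. ennreal (exp (lam * (\<sigma> * noise_sum t \<tau> s B \<omega>))) \<partial>samples S P T)
           \<le> ennreal (exp (lam\<^sup>2 * (eh * (4 / (1 - \<gamma>)\<^sup>2 + 2 * B\<^sup>2 / (1 - \<gamma>)))))"
proof -
  define t0 where "t0 = t - \<tau>"
  have t0: "t0 + \<tau> = t" using t by (simp add: t0_def)
  define F where "F i \<omega> s' y = \<sigma> * noise_term t s B i \<omega> s' y" for i \<omega> s' y
  define Z where "Z \<omega> = (\<Sum>i\<in>{t0<..t0+\<tau>}. \<Sum>s'\<in>S. F i \<omega> s' (\<omega> (i, s')))" for \<omega>
  have Z: "\<sigma> * noise_sum t \<tau> s B \<omega> = Z \<omega>" for \<omega>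
    unfolding noise_sum_def Z_def F_def t0 t0_def[symmetric] by (simp add: sum_distrib_left)
  have "(\<integral>\<^sup>+\<omega>. ennreal (exp (lam * (\<sigma> * noise_sum t \<tau> s B \<omega>))) \<partial>samples S P T)
               = (\<integral>\<^sup>+\<omega>. ennreal (exp (lam * Z \<omega>)) \<partial>samples S P (t0 + \<tau>))"
    unfolding Z
  proof (rule nn_integral_samples_le_horizon[OF finS])
    show "t0 + \<tau> \<le> T" using t0 t by simp
    fix \<omega> \<omega>' :: "nat \<times> nat \<Rightarrow> nat"
    assume agree: "\<And>j y. j \<le> t0 + \<tau> \<Longrightarrow> \<omega> (j, y) = \<omega>' (j, y)"
    have "F i \<omega> s' (\<omega> (i, s')) = F i \<omega>' s' (\<omega>' (i, s'))" if "i \<in> {t0<..t0+\<tau>}" for i s'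
      using that agree noise_term_eqI[of i \<omega> \<omega>' t s B] unfolding F_def by simp
    then show "ennreal (exp (lam * Z \<omega>)) = ennreal (exp (lam * Z \<omega>'))" unfolding Z_def by simp
  qed
  also have "\<dots> \<le> ennreal (exp (lam\<^sup>2 * (\<Sum>i\<in>{t0<..t0+\<tau>}. \<Sum>s'\<in>S.
                       (\<eta> i * \<gamma> * W i (t - i) s s')\<^sup>2 * (2 * var_Vs s' + 2 * B\<^sup>2))))"
    unfolding Z_def
  proof (rule nn_integral_exp_martingale_le[OF finS supp])
    fix i and \<omega> \<omega>' :: "nat \<times> nat \<Rightarrow> nat" and s' x
    show "(\<And>j y. j < i \<Longrightarrow> \<omega> (j, y) = \<omega>' (j, y)) \<Longrightarrow> F i \<omega> = F i \<omega>'"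
      unfolding F_def by (simp add: noise_term_eqI[of i \<omega> \<omega>'])
    assume i: "i \<in> {t0<..t0+\<tau>}" and s': "s' \<in> S"
    show "measure_pmf.expectation (P s') (F i \<omega> s') = 0"
      unfolding F_def expectation_eq_PV[OF s'] PV_cmult PV_noise_term[OF s'] by simp
    have "\<sigma>\<^sup>2 = 1" using power2_abs[of \<sigma>] \<sigma> by simp
    then show "measure_pmf.expectation (P s') (\<lambda>x. (F i \<omega> s' x)\<^sup>2)
                 \<le> (\<eta> i * \<gamma> * W i (t - i) s s')\<^sup>2 * (2 * var_Vs s' + 2 * B\<^sup>2)"
      unfolding F_def expectation_eq_PV[OF s'] power_mult_distrib[of \<sigma>]
      using PV_noise_term_square_le[OF s' B] by simp
    assume "x \<in> set_pmf (P s')"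
    then have x: "x \<in> S" using supp[OF s'] by auto
    have "\<bar>noise_term t s B i \<omega> s' x\<bar> \<le> \<eta> i * (1 / (1 - \<gamma>))"
      by (rule noise_term_abs_le[OF s s' x]) (use i t0 t in auto)
    also have "\<dots> \<le> eh * (1 / (1 - \<gamma>))"
      using eh(2)[of i] i t0 \<gamma>_less_1 by (intro mult_right_mono) (auto simp: t0_def)
    finally have "lam * \<bar>noise_term t s B i \<omega> s' x\<bar> \<le> (1 - \<gamma>) / eh * (eh * (1 / (1 - \<gamma>)))"
      using lam eh(1) \<gamma>_less_1 by (intro mult_mono) auto
    then show "\<bar>lam * F i \<omega> s' x\<bar> \<le> 1"
      unfolding F_def using lam \<sigma> eh(1) \<gamma>_less_1 by (simp add: abs_mult)
  qed
  also have "\<dots> \<le> ennreal (exp (lam\<^sup>2 * (eh * (4 / (1 - \<gamma>)\<^sup>2 + 2 * B\<^sup>2 / (1 - \<gamma>)))))"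
    using noise_variance_sum_le[OF s t _ eh(2) B] eh(1) t0
    by (intro ennreal_leI) (simp add: mult_left_mono t0_def)
  finally show ?thesis .
qed

definition dev_bound :: "real \<Rightarrow> real \<Rightarrow> real \<Rightarrow> real" where
  "dev_bound L eh B = 2 * sqrt (L * (eh * (4 / (1 - \<gamma>)\<^sup>2 + 2 * B\<^sup>2 / (1 - \<gamma>)))) + 2 * L * eh / (1 - \<gamma>)"

lemma noise_sum_tail:
  assumes "s \<in> S" "t \<le> T" "\<tau> \<le> t" "\<bar>\<sigma>\<bar> = 1"
    and eh: "0 < eh" "\<And>i. t - \<tau> < i \<Longrightarrow> i \<le> t \<Longrightarrow> \<eta> i \<le> eh" and "0 \<le> B" "0 \<le> L"
  shows "measure_pmf.prob (samples S P T) {\<omega>. dev_bound L eh B \<le> \<sigma> * noise_sum t \<tau> s B \<omega>} \<le> exp (- L)"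
proof -
  have "measure_pmf.prob (samples S P T)
          {\<omega>. 2 * sqrt (L * (eh * (4 / (1 - \<gamma>)\<^sup>2 + 2 * B\<^sup>2 / (1 - \<gamma>)))) + 2 * L / ((1 - \<gamma>) / eh)
                 \<le> \<sigma> * noise_sum t \<tau> s B \<omega>} \<le> exp (- L)"
    using assms \<gamma>_less_1 by (intro prob_ge_le_exp_neg noise_sum_exp_moment_le) auto
  then show ?thesis unfolding dev_bound_def by simp
qed

lemma noise_sum_abs_tail:
  assumes "s \<in> S" "t \<le> T" "\<tau> \<le> t"
    and "0 < eh" "\<And>i. t - \<tau> < i \<Longrightarrow> i \<le> t \<Longrightarrow> \<eta> i \<le> eh" and "0 \<le> B" "0 \<le> L"
  shows "measure_pmf.prob (samples S P T) {\<omega>. dev_bound L eh B \<le> \<bar>noise_sum t \<tau> s B \<omega>\<bar>} \<le> 2 * exp (- L)"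
proof -
  define A where "A \<sigma> = {\<omega>. dev_bound L eh B \<le> \<sigma> * noise_sum t \<tau> s B \<omega>}" for \<sigma> :: real
  have "measure_pmf.prob (samples S P T) {\<omega>. dev_bound L eh B \<le> \<bar>noise_sum t \<tau> s B \<omega>\<bar>}
          \<le> measure_pmf.prob (samples S P T) (A 1 \<union> A (-1))"
    by (rule measure_pmf.finite_measure_mono) (auto simp: A_def abs_real_def)
  also have "\<dots> \<le> measure_pmf.prob (samples S P T) (A 1) + measure_pmf.prob (samples S P T) (A (-1))"
    by (rule measure_Un_le) auto
  also have "\<dots> \<le> exp (- L) + exp (- L)"
    unfolding A_def
    using noise_sum_tail[OF assms(1-3) _ assms(4-7), of 1] noise_sum_tail[OF assms(1-3) _ assms(4-7), of "-1"]
    by simp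
  finally show ?thesis by simp
qed

subsection \<open>Two rounds of bootstrapping\<close>

lemma sum_noise_eq_noise_sum:
  assumes s: "s \<in> S" and bounded: "\<And>i. t - \<tau> < i \<Longrightarrow> i \<le> t \<Longrightarrow> err_bounded \<omega> (i - 1) B"
  shows "(\<Sum>i\<in>{t-\<tau><..t}. \<eta> i * Wapp i (t - i) (\<lambda>x. \<gamma> * noise \<omega> i x) s) = noise_sum t \<tau> s B \<omega>"
  unfolding noise_sum_def Wapp_eq_sum_W[OF s] sum_distrib_left
  using bounded by (intro sum.cong refl) (simp add: noise_term_def trunc_noise_def noise_def algebra_simps)

lemma err_window_le:
  assumes s: "s \<in> S" and t: "t \<le> T" "\<tau> \<le> t"
    and bounded: "\<And>i. t - \<tau> < i \<Longrightarrow> i \<le> t \<Longrightarrow> err_bounded \<omega> (i - 1) B"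
    and start: "\<And>x. x \<in> S \<Longrightarrow> \<bar>err \<omega> (t - \<tau>) x\<bar> \<le> B'"
  shows "\<bar>err \<omega> t s\<bar> \<le> damping (t - \<tau>) \<tau> * B' + \<bar>noise_sum t \<tau> s B \<omega>\<bar>"
proof -
  have "err \<omega> t s = Wapp (t - \<tau>) \<tau> (err \<omega> (t - \<tau>)) s + noise_sum t \<tau> s B \<omega>"
    using err_decomp[OF s, of \<omega> "t - \<tau>" \<tau>] sum_noise_eq_noise_sum[OF s bounded] t by simp
  moreover have "\<bar>Wapp (t - \<tau>) \<tau> (err \<omega> (t - \<tau>)) s\<bar> \<le> damping (t - \<tau>) \<tau> * B'"
    using t start by (intro Wapp_abs_le[OF s]) auto
  ultimately show ?thesis by linarith
qed

lemma err_le_if_noise_small: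
  assumes \<omega>: "samples_in_S \<omega> T" and \<tau>: "2 * \<tau> \<le> T"
    and damping: "\<And>t0. t0 + \<tau> \<le> T \<Longrightarrow> damping t0 \<tau> * (1 / (1 - \<gamma>)) \<le> Eb"
    and round1: "\<And>t x. t \<in> {T-\<tau>..T} \<Longrightarrow> x \<in> S \<Longrightarrow> \<bar>noise_sum t \<tau> x (1 / (1 - \<gamma>)) \<omega>\<bar> < A1"
    and round2: "\<And>x. x \<in> S \<Longrightarrow> \<bar>noise_sum T \<tau> x (Eb + A1) \<omega>\<bar> < A2"
    and s: "s \<in> S"
  shows "\<bar>err \<omega> T s\<bar> \<le> Eb + A2"
proof -
  have err0: "\<bar>err \<omega> j x\<bar> \<le> 1 / (1 - \<gamma>)" if "j \<le> T" "x \<in> S" for j x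
    using err_bounds samples_in_S_mono[OF \<omega>] that by blast
  have err1: "\<bar>err \<omega> t x\<bar> \<le> Eb + A1" if t: "t \<in> {T-\<tau>..T}" and x: "x \<in> S" for t x
  proof -
    have "\<bar>err \<omega> t x\<bar> \<le> damping (t - \<tau>) \<tau> * (1 / (1 - \<gamma>)) + \<bar>noise_sum t \<tau> x (1 / (1 - \<gamma>)) \<omega>\<bar>"
      using t \<tau> err0 samples_in_S_mono[OF \<omega>]
      by (intro err_window_le[OF x]) (auto simp: err_bounded_def)
    then show ?thesis using damping[of "t - \<tau>"] round1[OF t x] t \<tau> by auto
  qed
  have "err_bounded \<omega> (i - 1) (Eb + A1)" if "T - \<tau> < i" "i \<le> T" for i
  proof -
    have "i - 1 \<in> {T-\<tau>..T}" using that by auto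
    then show ?thesis using err1 samples_in_S_mono[OF \<omega>, of "i - 1"] unfolding err_bounded_def by auto
  qed
  then have "\<bar>err \<omega> T s\<bar> \<le> damping (T - \<tau>) \<tau> * (1 / (1 - \<gamma>)) + \<bar>noise_sum T \<tau> s (Eb + A1) \<omega>\<bar>"
    using \<tau> err0 by (intro err_window_le[OF s]) auto
  then show ?thesis using damping[of "T - \<tau>"] round2[OF s] \<tau> by auto
qed

lemma prob_errors_le:
  assumes \<tau>: "2 * \<tau> \<le> T" and eh: "0 < eh" "\<And>i. T - 2 * \<tau> < i \<Longrightarrow> i \<le> T \<Longrightarrow> \<eta> i \<le> eh"
    and damping: "\<And>t0. t0 + \<tau> \<le> T \<Longrightarrow> damping t0 \<tau> * (1 / (1 - \<gamma>)) \<le> Eb"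
    and L: "0 \<le> L"
    and \<epsilon>: "Eb + dev_bound L eh (Eb + dev_bound L eh (1 / (1 - \<gamma>))) \<le> \<epsilon>"
    and \<delta>: "(2 * real \<tau> + 4) * real (card S) * exp (- L) \<le> \<delta>"
  shows "1 - \<delta> \<le> measure_pmf.prob (samples S P T) {\<omega>. \<forall>s\<in>S. \<bar>V \<omega> T s - Vs s\<bar> \<le> \<epsilon>}"
proof -
  define Q where "Q = samples S P T"
  define B0 where "B0 = 1 / (1 - \<gamma>)"
  define A1 where "A1 = dev_bound L eh B0"
  define A2 where "A2 = dev_bound L eh (Eb + A1)"
  define Bad1 where "Bad1 = (\<Union>(t, x)\<in>{T-\<tau>..T} \<times> S. {\<omega>. A1 \<le> \<bar>noise_sum t \<tau> x B0 \<omega>\<bar>})"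
  define Bad2 where "Bad2 = (\<Union>x\<in>S. {\<omega>. A2 \<le> \<bar>noise_sum T \<tau> x (Eb + A1) \<omega>\<bar>})"
  have "0 \<le> damping 0 \<tau> * B0" using damping_bounds[of 0 \<tau>] \<tau> \<gamma>_less_1 by (simp add: B0_def)
  then have "0 \<le> Eb + A1" using damping[of 0] \<tau> L eh \<gamma>_less_1 by (simp add: A1_def B0_def dev_bound_def)
  have window: "\<eta> i \<le> eh" if "t \<in> {T-\<tau>..T}" "t - \<tau> < i" "i \<le> t" for t i
    using eh(2) that by auto
  have "measure_pmf.prob Q Bad1 \<le> card ({T-\<tau>..T} \<times> S) * (2 * exp (- L))"
    unfolding Bad1_def
  proof (rule prob_UN_le_card_mult)
    fix p assume "p \<in> {T-\<tau>..T} \<times> S"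
    then obtain t x where p: "p = (t, x)" "t \<in> {T-\<tau>..T}" "x \<in> S" by blast
    then show "measure_pmf.prob Q ((\<lambda>(t, x). {\<omega>. A1 \<le> \<bar>noise_sum t \<tau> x B0 \<omega>\<bar>}) p) \<le> 2 * exp (- L)"
      unfolding Q_def A1_def B0_def using \<tau> window[OF p(2)] L eh(1) \<gamma>_less_1
      by (auto intro!: noise_sum_abs_tail)
  qed (use finS in simp)
  moreover have "measure_pmf.prob Q Bad2 \<le> card S * (2 * exp (- L))"
    unfolding Bad2_def Q_def A2_def using finS \<tau> eh \<open>0 \<le> Eb + A1\<close> L
    by (intro prob_UN_le_card_mult noise_sum_abs_tail) auto
  moreover have "measure_pmf.prob Q (Bad1 \<union> Bad2) \<le> measure_pmf.prob Q Bad1 + measure_pmf.prob Q Bad2"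
    by (rule measure_Un_le) auto
  moreover have "card ({T-\<tau>..T} \<times> S) = (\<tau> + 1) * card S" using \<tau> by (simp add: card_cartesian_product)
  ultimately have bad: "measure_pmf.prob Q (Bad1 \<union> Bad2) \<le> \<delta>"
    using \<delta> by (simp add: algebra_simps)
  show ?thesis unfolding Q_def[symmetric]
  proof (rule prob_ge_1_minus[OF bad])
    fix \<omega> assume \<omega>: "\<omega> \<in> set_pmf Q" "\<omega> \<notin> Bad1 \<union> Bad2"
    have "\<bar>err \<omega> T s\<bar> \<le> Eb + A2" if "s \<in> S" for s
      using \<omega> samples_in_S_of_set_pmf \<tau> damping that unfolding Q_def Bad1_def Bad2_def B0_def
      by (intro err_le_if_noise_small) (auto simp: not_le)
    then show "\<omega> \<in> {\<omega>. \<forall>s\<in>S. \<bar>V \<omega> T s - Vs s\<bar> \<le> \<epsilon>}"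
      using \<epsilon> unfolding err_def A2_def A1_def B0_def by fastforce
  qed
qed

end

section \<open>Choice of the parameters\<close>

lemma dev_arith_le:
  fixes h \<epsilon> X B :: real
  assumes h: "0 < h" and \<epsilon>: "0 < \<epsilon>" and X: "0 \<le> X" "X \<le> h\<^sup>2 * \<epsilon>\<^sup>2 / 256"
  shows "2 * sqrt (X * (4 / h\<^sup>2 + 2 * B\<^sup>2 / h)) + 2 * X / h \<le> \<epsilon> / 8 * sqrt (4 + 2 * h * B\<^sup>2) + h * \<epsilon>\<^sup>2 / 128"
proof -
  have "X * (4 / h\<^sup>2 + 2 * B\<^sup>2 / h) \<le> h\<^sup>2 * \<epsilon>\<^sup>2 / 256 * (4 / h\<^sup>2 + 2 * B\<^sup>2 / h)"
    using X h by (intro mult_right_mono) auto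
  also have "\<dots> = (\<epsilon> / 16)\<^sup>2 * (4 + 2 * h * B\<^sup>2)"
    using h by (simp add: field_simps power2_eq_square)
  finally have "sqrt (X * (4 / h\<^sup>2 + 2 * B\<^sup>2 / h)) \<le> sqrt ((\<epsilon> / 16)\<^sup>2 * (4 + 2 * h * B\<^sup>2))"
    by (rule real_sqrt_le_mono)
  also have "\<dots> = \<epsilon> / 16 * sqrt (4 + 2 * h * B\<^sup>2)"
    using \<epsilon> by (simp add: real_sqrt_mult)
  finally have 1: "2 * sqrt (X * (4 / h\<^sup>2 + 2 * B\<^sup>2 / h)) \<le> \<epsilon> / 8 * sqrt (4 + 2 * h * B\<^sup>2)"
    by simp
  have "2 * X / h \<le> 2 * (h\<^sup>2 * \<epsilon>\<^sup>2 / 256) / h"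
    using X h by (intro divide_right_mono) (auto simp: algebra_simps)
  also have "\<dots> = h * \<epsilon>\<^sup>2 / 128"
    using h by (simp add: power2_eq_square)
  finally show ?thesis using 1 by simp
qed

lemma bootstrap_arith:
  fixes h \<epsilon> X :: real
  assumes h: "0 < h" "h \<le> 1/2" and \<epsilon>: "0 < \<epsilon>" "\<epsilon> \<le> 1" and X: "0 \<le> X" "X \<le> h\<^sup>2 * \<epsilon>\<^sup>2 / 256"
  defines "a B \<equiv> 2 * sqrt (X * (4 / h\<^sup>2 + 2 * B\<^sup>2 / h)) + 2 * X / h"
  shows "\<epsilon> / 4 + a (\<epsilon> / 4 + a (1 / h)) \<le> \<epsilon>"
proof -
  have a_le: "a B \<le> \<epsilon> / 8 * sqrt (4 + 2 * h * B\<^sup>2) + h * \<epsilon>\<^sup>2 / 128" for B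
    unfolding a_def using dev_arith_le[OF h(1) \<epsilon>(1) X] .
  define B1 where "B1 = \<epsilon> / 4 + a (1 / h)"
  have "0 \<le> a (1 / h)" unfolding a_def using X h by simp
  then have B1: "0 \<le> B1" using \<epsilon> by (simp add: B1_def)
  define p where "p = \<epsilon> / 4 + h * \<epsilon>\<^sup>2 / 128"
  define q where "q = \<epsilon> / 8 * sqrt (4 + 2 / h)"
  have "B1 \<le> p + q" using a_le[of "1 / h"] h by (simp add: B1_def p_def q_def power2_eq_square)
  have "h * \<epsilon>\<^sup>2 \<le> 1 * 1" using h \<epsilon> by (intro mult_mono) (auto simp: power_le_one)
  then have "0 \<le> p" "p \<le> 1/2" using \<epsilon> h by (auto simp: p_def)
  have "q\<^sup>2 = \<epsilon>\<^sup>2 / 64 * (4 + 2 / h)"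
    using h by (simp add: q_def power_mult_distrib power_divide)
  then have "h * q\<^sup>2 = \<epsilon>\<^sup>2 * (4 * h + 2) / 64"
    using h by (simp add: field_simps)
  also have "\<dots> \<le> 1 * 4 / 64"
    using h \<epsilon> by (intro divide_right_mono mult_mono) (auto simp: power_le_one)
  finally have hq: "h * q\<^sup>2 \<le> 1 / 16" by simp
  have "h * B1\<^sup>2 \<le> h * (2 * p\<^sup>2 + 2 * q\<^sup>2)"
  proof -
    have "B1\<^sup>2 \<le> (p + q)\<^sup>2" using B1 \<open>B1 \<le> p + q\<close> by (intro power_mono) auto
    also have "\<dots> \<le> 2 * p\<^sup>2 + 2 * q\<^sup>2"
      using zero_le_power2[of "p - q"] by (simp add: power2_eq_square algebra_simps)
    finally show ?thesis using h by (intro mult_left_mono) auto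
  qed
  also have "\<dots> = 2 * (h * p\<^sup>2) + 2 * (h * q\<^sup>2)" by (simp add: algebra_simps)
  also have "\<dots> \<le> 2 * ((1/2) * (1/2)\<^sup>2) + 2 * (1 / 16)"
    using hq h \<open>0 \<le> p\<close> \<open>p \<le> 1/2\<close> by (intro add_mono mult_left_mono mult_mono power_mono) auto
  finally have "h * B1\<^sup>2 \<le> 1" by (simp add: power2_eq_square)
  then have "sqrt (4 + 2 * h * B1\<^sup>2) \<le> sqrt (3\<^sup>2)" by (intro real_sqrt_le_mono) simp
  then have "\<epsilon> / 8 * sqrt (4 + 2 * h * B1\<^sup>2) \<le> \<epsilon> / 8 * 3"
    using \<epsilon> by (intro mult_left_mono) auto
  moreover have "h * \<epsilon>\<^sup>2 \<le> 1 * \<epsilon>"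
    using h \<epsilon> by (intro mult_mono) (auto simp: power2_eq_square mult_le_one)
  ultimately show ?thesis using a_le[of B1] \<epsilon> unfolding B1_def[symmetric] by linarith
qed

lemma horizon_arith:
  fixes c2 h \<epsilon> x \<Lambda> :: real
  assumes c2: "0 < c2" "c2 \<le> 1/16" and h: "0 < h" "h \<le> 1/2" and \<epsilon>: "0 < \<epsilon>" "\<epsilon> \<le> 1"
    and x: "2 \<le> x" and \<Lambda>: "ln x \<le> \<Lambda>"
    and horizon: "2000 / c2 * (ln x)^3 * \<Lambda> \<le> x * (h^3 * \<epsilon>^2)"
  shows "8 \<le> x" and "1 \<le> ln x" and "16 * ln x \<le> h * x" and "4 \<le> h * \<epsilon> * x"
    and "1536 * (\<Lambda> * (ln x)\<^sup>2) \<le> c2 * (x * (h^3 * \<epsilon>^2))"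
proof -
  define l where "l = ln x"
  define K where "K = x * (h^3 * \<epsilon>^2)"
  have c3: "32000 \<le> 2000 / c2" using c2 by (simp add: field_simps)
  have "h\<^sup>2 * \<epsilon> \<le> 1" using h \<epsilon> by (intro mult_le_one) (auto simp: power_le_one)
  then have "(h * \<epsilon>) * (h\<^sup>2 * \<epsilon>) \<le> (h * \<epsilon>) * 1" using h \<epsilon> by (intro mult_left_mono) auto
  then have "h^3 * \<epsilon>^2 \<le> h * \<epsilon>" by (simp add: power2_eq_square power3_eq_cube algebra_simps)
  then have K_le: "K \<le> h * \<epsilon> * x" unfolding K_def using x by (simp add: mult_left_mono mult.commute)
  have "h * \<epsilon> \<le> 1" using h \<epsilon> by (intro mult_le_one) auto
  then have hex: "h * \<epsilon> * x \<le> x" using x by (simp add: mult_left_le_one_le)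
  have hx: "h * \<epsilon> * x \<le> h * x" using h \<epsilon> x by (simp add: mult_right_le_one_le)
  have l0: "0 < l" using x by (simp add: l_def)
  have c3l: "2000 / c2 * l^3 * \<Lambda> \<le> K" using horizon by (simp add: l_def K_def)
  have l4: "2000 / c2 * l^4 \<le> K"
  proof -
    have "2000 / c2 * l^4 = 2000 / c2 * l^3 * l" by (simp add: power_Suc2[symmetric] mult.assoc)
    also have "\<dots> \<le> 2000 / c2 * l^3 * \<Lambda>" using \<Lambda> c2 l0 by (intro mult_left_mono) (auto simp: l_def)
    finally show ?thesis using c3l by simp
  qed
  have "ln 2 \<le> l" using x by (simp add: l_def)
  then have "2/3 \<le> l" using ln2_ge_two_thirds by simp
  then have "32000 * (2/3)^4 \<le> 2000 / c2 * l^4" using c3 c2 by (intro mult_mono power_mono) auto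
  then show x8: "8 \<le> x" using l4 K_le hex by (simp add: power_divide)
  have "exp 1 \<le> x" using e_less_272 x8 by simp
  then show l1: "1 \<le> ln x" using x by (simp add: ln_ge_iff)
  have "l \<le> l^4" using l1 power_increasing[of 1 4 l] by (simp add: l_def)
  then have "16 * l \<le> 2000 / c2 * l^4" using c3 c2 l1 by (intro mult_mono) (auto simp: l_def)
  then show "16 * ln x \<le> h * x" using l4 K_le hx by (simp add: l_def)
  have "1 * 1 \<le> l^3 * \<Lambda>" using l1 \<Lambda> by (intro mult_mono one_le_power) (auto simp: l_def)
  then have "2000 / c2 * 1 \<le> 2000 / c2 * (l^3 * \<Lambda>)" using c2 by (intro mult_left_mono) auto
  then show "4 \<le> h * \<epsilon> * x" using c3 c3l K_le by (simp add: mult.assoc)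
  have "l\<^sup>2 \<le> l^3" using l1 power_increasing[of 2 3 l] by (simp add: l_def)
  then have "1536 * (\<Lambda> * l\<^sup>2) \<le> 2000 * (\<Lambda> * l^3)" using \<Lambda> l0 by (intro mult_mono) (auto simp: l_def)
  also have "\<dots> \<le> c2 * K" using c3l c2 by (simp add: field_simps)
  finally show "1536 * (\<Lambda> * (ln x)\<^sup>2) \<le> c2 * (x * (h^3 * \<epsilon>^2))" by (simp add: l_def K_def)
qed

text \<open>The hypotheses of the theorem, with \<open>c0 = 1/16\<close> and \<open>c3 = 2000 / c2\<close>.\<close>

locale td_schedule = td_setting +
  fixes c1 c2 \<delta> \<epsilon> :: real
  assumes c2_pos: "0 < c2" and c2_le_c1: "c2 \<le> c1" and c1_le: "c1 \<le> 1/16"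
    and S_nonempty: "S \<noteq> {}" and \<delta>_bounds: "0 < \<delta>" "\<delta> < 1" and \<epsilon>_bounds: "0 < \<epsilon>" "\<epsilon> \<le> 1"
    and \<gamma>_ge: "1/2 \<le> \<gamma>" and T_ge_2: "2 \<le> T"
    and \<eta>_lower: "\<And>t. t \<le> T \<Longrightarrow> 1 / (1 + c1 * (1 - \<gamma>) * real T / (ln (real T))\<^sup>2) \<le> \<eta> t"
    and \<eta>_upper: "\<And>t. t \<le> T \<Longrightarrow> \<eta> t \<le> 1 / (1 + c2 * (1 - \<gamma>) * real t / (ln (real T))\<^sup>2)"
    and horizon: "real T \<ge> (2000 / c2) * (ln (real T))^3 * ln (real (card S) * real T / \<delta>)
                             / ((1 - \<gamma>)^3 * \<epsilon>^2)"
begin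

lemma T_le_card_S_T_div_\<delta>: "real T \<le> real (card S) * real T / \<delta>"
proof -
  have "1 \<le> real (card S)" using finS S_nonempty by (simp add: Suc_leI card_gt_0_iff)
  then have "real T * \<delta> \<le> real (card S) * real T"
    using \<delta>_bounds mult_mono[of "real T" "real T" \<delta> "real (card S)"] by (simp add: mult.commute)
  then show ?thesis using \<delta>_bounds by (simp add: field_simps)
qed

lemma horizon_consequences:
  shows "8 \<le> real T" and "1 \<le> ln (real T)" and "16 * ln (real T) \<le> (1 - \<gamma>) * real T"
    and "4 \<le> (1 - \<gamma>) * \<epsilon> * real T"
    and "1536 * (ln (real (card S) * real T / \<delta>) * (ln (real T))\<^sup>2) \<le> c2 * (real T * ((1 - \<gamma>)^3 * \<epsilon>^2))"
proof -
  have "ln (real T) \<le> ln (real (card S) * real T / \<delta>)" using T_le_card_S_T_div_\<delta> T_ge_2 by simp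
  moreover have "2000 / c2 * (ln (real T))^3 * ln (real (card S) * real T / \<delta>) \<le> real T * ((1 - \<gamma>)^3 * \<epsilon>^2)"
  proof -
    have "0 < (1 - \<gamma>)^3 * \<epsilon>^2" using \<gamma>_less_1 \<epsilon>_bounds by simp
    then show ?thesis using horizon by (simp only: pos_divide_le_eq)
  qed
  moreover note horizon_arith[OF c2_pos _ _ _ \<epsilon>_bounds _ calculation] c2_le_c1 c1_le \<gamma>_ge \<gamma>_less_1 T_ge_2
  ultimately show "8 \<le> real T" and "1 \<le> ln (real T)" and "16 * ln (real T) \<le> (1 - \<gamma>) * real T"
    and "4 \<le> (1 - \<gamma>) * \<epsilon> * real T"
    and "1536 * (ln (real (card S) * real T / \<delta>) * (ln (real T))\<^sup>2) \<le> c2 * (real T * ((1 - \<gamma>)^3 * \<epsilon>^2))"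
    by auto
qed

lemma late_step_size_le:
  assumes "T - 2 * (T div 4) < i" "i \<le> T"
  shows "\<eta> i \<le> 2 * (ln (real T))\<^sup>2 / (c2 * (1 - \<gamma>) * real T)"
proof -
  define l where "l = ln (real T)"
  have l: "1 \<le> l" using horizon_consequences(2) by (simp add: l_def)
  have "4 * (T div 4) \<le> T" by simp
  then have "T \<le> 2 * i" using assms(1) by linarith
  then have iT: "real T / 2 \<le> real i" by linarith
  have i0: "0 < real i" using iT T_ge_2 by linarith
  define x where "x = c2 * (1 - \<gamma>) * real i / l\<^sup>2"
  have x0: "0 < x" using c2_pos \<gamma>_less_1 i0 l by (simp add: x_def)
  have "\<eta> i \<le> 1 / (1 + x)" using \<eta>_upper[OF assms(2)] by (simp add: l_def x_def)
  also have "\<dots> \<le> 1 / x" using x0 by (intro divide_left_mono) auto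
  also have "\<dots> = l\<^sup>2 / (c2 * (1 - \<gamma>) * real i)" by (simp add: x_def)
  also have "\<dots> \<le> l\<^sup>2 / (c2 * (1 - \<gamma>) * (real T / 2))"
    using c2_pos \<gamma>_less_1 iT T_ge_2 by (intro divide_left_mono mult_left_mono mult_pos_pos) auto
  also have "\<dots> = 2 * l\<^sup>2 / (c2 * (1 - \<gamma>) * real T)" by (simp add: field_simps)
  finally show ?thesis by (simp add: l_def)
qed

lemma damping_window_le:
  assumes "t0 + T div 4 \<le> T"
  shows "damping t0 (T div 4) * (1 / (1 - \<gamma>)) \<le> \<epsilon> / 4"
proof -
  define l where "l = ln (real T)"
  define lo where "lo = 1 / (1 + c1 * (1 - \<gamma>) * real T / l\<^sup>2)"
  have l: "1 \<le> l" using horizon_consequences(2) by (simp add: l_def)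
  have lo_pos: "0 < 1 + c1 * (1 - \<gamma>) * real T / l\<^sup>2"
    using c2_pos c2_le_c1 \<gamma>_less_1 by (intro add_pos_nonneg) auto
  have "real T \<le> 4 * real (T div 4) + 3" by linarith
  then have \<tau>: "real T / 8 \<le> real (T div 4)" using horizon_consequences(1) by linarith
  have "c1 * (1 - \<gamma>) * real T / l \<le> (1/16) * (1 - \<gamma>) * real T / 1"
    using c2_pos c2_le_c1 c1_le \<gamma>_less_1 l by (intro frac_le mult_right_mono mult_nonneg_nonneg) auto
  moreover have "l * (1 + c1 * (1 - \<gamma>) * real T / l\<^sup>2) = l + c1 * (1 - \<gamma>) * real T / l"
    using l by (simp add: field_simps power2_eq_square)
  ultimately have "l * (1 + c1 * (1 - \<gamma>) * real T / l\<^sup>2) \<le> (1 - \<gamma>) * real T / 8"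
    using horizon_consequences(3) by (simp add: l_def)
  also have "\<dots> \<le> (1 - \<gamma>) * real (T div 4)" using \<tau> \<gamma>_less_1 by simp
  finally have "l \<le> lo * (1 - \<gamma>) * real (T div 4)" unfolding lo_def using lo_pos by (simp add: field_simps)
  moreover have "damping t0 (T div 4) \<le> exp (- (lo * (1 - \<gamma>) * real (T div 4)))"
    using assms \<eta>_lower by (intro damping_le_exp) (auto simp: lo_def l_def)
  ultimately have "damping t0 (T div 4) \<le> exp (- l)" by (meson exp_le_cancel_iff neg_le_iff_le order_trans)
  also have "exp (- l) = 1 / real T" using T_ge_2 by (simp add: l_def exp_minus inverse_eq_divide)
  finally have "damping t0 (T div 4) * (1 / (1 - \<gamma>)) \<le> 1 / real T * (1 / (1 - \<gamma>))"
    using \<gamma>_less_1 by (intro mult_right_mono) auto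
  also have "\<dots> \<le> \<epsilon> / 4"
    using horizon_consequences(4) \<gamma>_less_1 T_ge_2 \<epsilon>_bounds by (simp add: field_simps)
  finally show ?thesis .
qed

lemma union_bound_le:
  "(2 * real (T div 4) + 4) * real (card S) * exp (- ln (4 * real (card S) * real T / \<delta>)) \<le> \<delta>"
proof -
  have N: "card S \<noteq> 0" using finS S_nonempty by simp
  have "exp (- ln (4 * real (card S) * real T / \<delta>)) = \<delta> / (4 * real (card S) * real T)"
    using N T_ge_2 \<delta>_bounds by (simp add: exp_minus inverse_eq_divide)
  then have "(2 * real (T div 4) + 4) * real (card S) * exp (- ln (4 * real (card S) * real T / \<delta>))
               = (2 * real (T div 4) + 4) * real (card S) * (\<delta> / (4 * real (card S) * real T))"
    by (simp only:)
  also have "\<dots> = (2 * real (T div 4) + 4) * \<delta> / (4 * real T)"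
    using N T_ge_2 by (simp add: field_simps)
  also have "\<dots> \<le> (4 * real T) * \<delta> / (4 * real T)"
    using T_ge_2 \<delta>_bounds by (intro divide_right_mono mult_right_mono) linarith+
  also have "\<dots> = \<delta>" using T_ge_2 by simp
  finally show ?thesis .
qed

lemma dev_param_le:
  "ln (4 * real (card S) * real T / \<delta>) * (2 * (ln (real T))\<^sup>2 / (c2 * (1 - \<gamma>) * real T))
     \<le> (1 - \<gamma>)\<^sup>2 * \<epsilon>\<^sup>2 / 256"
proof -
  define y where "y = real (card S) * real T / \<delta>"
  have y: "2 \<le> y" using T_le_card_S_T_div_\<delta> T_ge_2 by (simp add: y_def)
  have "4 * y \<le> y ^ 3"
  proof -
    have "2 * 2 \<le> y * y" using y by (intro mult_mono) auto
    then show ?thesis using y mult_right_mono[of "2 * 2" "y * y" y] by (simp add: power3_eq_cube)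
  qed
  then have "ln (4 * y) \<le> ln (y ^ 3)" using y by simp
  also have "\<dots> = 3 * ln y" using y by (simp add: ln_realpow)
  finally have "ln (4 * y) \<le> 3 * ln y" .
  then have L: "ln (4 * real (card S) * real T / \<delta>) \<le> 3 * ln y" by (simp add: y_def mult.assoc)
  have pos: "0 < c2 * (1 - \<gamma>) * real T" using c2_pos \<gamma>_less_1 T_ge_2 by simp
  have "ln (4 * real (card S) * real T / \<delta>) * (2 * (ln (real T))\<^sup>2 / (c2 * (1 - \<gamma>) * real T))
          \<le> 3 * ln y * (2 * (ln (real T))\<^sup>2 / (c2 * (1 - \<gamma>) * real T))"
    using L pos by (intro mult_right_mono) auto
  also have "\<dots> = 6 * (ln y * (ln (real T))\<^sup>2) / (c2 * (1 - \<gamma>) * real T)" by simp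
  also have "\<dots> \<le> (1 - \<gamma>)\<^sup>2 * \<epsilon>\<^sup>2 / 256"
  proof (subst pos_divide_le_eq[OF pos])
    have "(1 - \<gamma>)\<^sup>2 * \<epsilon>\<^sup>2 / 256 * (c2 * (1 - \<gamma>) * real T) = c2 * (real T * ((1 - \<gamma>)^3 * \<epsilon>^2)) / 256"
      by (simp add: power2_eq_square power3_eq_cube)
    then show "6 * (ln y * (ln (real T))\<^sup>2) \<le> (1 - \<gamma>)\<^sup>2 * \<epsilon>\<^sup>2 / 256 * (c2 * (1 - \<gamma>) * real T)"
      using horizon_consequences(5) unfolding y_def by linarith
  qed
  finally show ?thesis .
qed

lemma td_error_le_whp:
  "1 - \<delta> \<le> measure_pmf.prob (samples S P T)
              {\<omega>. \<forall>s\<in>S. \<bar>td r \<gamma> \<eta> V0 \<omega> T s - Vstar P r \<gamma> s\<bar> \<le> \<epsilon>}"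
proof (rule prob_errors_le)
  define eh where "eh = 2 * (ln (real T))\<^sup>2 / (c2 * (1 - \<gamma>) * real T)"
  define L where "L = ln (4 * real (card S) * real T / \<delta>)"
  show "2 * (T div 4) \<le> T" by simp
  show "0 < eh" using horizon_consequences(2) c2_pos \<gamma>_less_1 T_ge_2 by (simp add: eh_def)
  show "\<eta> i \<le> eh" if "T - 2 * (T div 4) < i" "i \<le> T" for i
    using late_step_size_le[OF that] by (simp add: eh_def)
  show "damping t0 (T div 4) * (1 / (1 - \<gamma>)) \<le> \<epsilon> / 4" if "t0 + T div 4 \<le> T" for t0
    by (rule damping_window_le[OF that])
  have "1 \<le> 4 * (real (card S) * real T / \<delta>)" using T_le_card_S_T_div_\<delta> T_ge_2 by linarith
  then show "0 \<le> L" by (simp add: L_def)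
  have "dev_bound L eh B = 2 * sqrt (L * eh * (4 / (1 - \<gamma>)\<^sup>2 + 2 * B\<^sup>2 / (1 - \<gamma>))) + 2 * (L * eh) / (1 - \<gamma>)"
    for B by (simp add: dev_bound_def mult.assoc)
  then show "\<epsilon> / 4 + dev_bound L eh (\<epsilon> / 4 + dev_bound L eh (1 / (1 - \<gamma>))) \<le> \<epsilon>"
    using bootstrap_arith[of "1 - \<gamma>" \<epsilon> "L * eh"] \<gamma>_ge \<gamma>_less_1 \<epsilon>_bounds \<open>0 \<le> L\<close> \<open>0 < eh\<close> dev_param_le
    unfolding L_def[symmetric] eh_def[symmetric] by simp
  show "(2 * real (T div 4) + 4) * real (card S) * exp (- L) \<le> \<delta>"
    unfolding L_def by (rule union_bound_le)
qed

end

theorem theorem1: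
  shows "\<exists>c0::real. c0 > 0 \<and>
    (\<forall>c1 c2::real. 0 < c2 \<and> c2 \<le> c1 \<and> c1 \<le> c0 \<longrightarrow>
      (\<exists>c3::real. c3 > 0 \<and>
        (\<forall>(S::nat set) (P::nat \<Rightarrow> nat pmf) (r::nat \<Rightarrow> real) (\<gamma>::real) (\<delta>::real) (\<epsilon>::real)
           (\<eta>::nat \<Rightarrow> real) (T::nat) (V0::nat \<Rightarrow> real).
          finite S \<and> S \<noteq> {} \<and>
          (\<forall>s\<in>S. set_pmf (P s) \<subseteq> S) \<and>
          (\<forall>s\<in>S. 0 \<le> r s \<and> r s \<le> 1) \<and>
          0 < \<delta> \<and> \<delta> < 1 \<and> 0 < \<epsilon> \<and> \<epsilon> \<le> 1 \<and> 1/2 \<le> \<gamma> \<and> \<gamma> < 1 \<and>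
          T \<ge> 2 \<and>
          (\<forall>t\<le>T. 0 < \<eta> t \<and> \<eta> t \<le> 1) \<and>
          (\<forall>t\<le>T. 1 / (1 + c1 * (1 - \<gamma>) * real T / (ln (real T))^2) \<le> \<eta> t \<and>
                   \<eta> t \<le> 1 / (1 + c2 * (1 - \<gamma>) * real t / (ln (real T))^2)) \<and>
          real T \<ge> c3 * (ln (real T))^3 * ln (real (card S) * real T / \<delta>)
                     / ((1 - \<gamma>)^3 * \<epsilon>^2) \<and>
          (\<forall>s\<in>S. 0 \<le> V0 s \<and> V0 s \<le> 1 / (1 - \<gamma>))
          \<longrightarrow>
          measure_pmf.prob (samples S P T)
            {\<omega>. \<forall>s\<in>S. \<bar>td r \<gamma> \<eta> V0 \<omega> T s - Vstar P r \<gamma> s\<bar> \<le> \<epsilon>} \<ge> 1 - \<delta>)))"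
proof (rule exI[of _ "1/16"], intro conjI allI impI, goal_cases)
  case 1
  show ?case by simp
next
  case (2 c1 c2)
  then have c: "0 < c2" "c2 \<le> c1" "c1 \<le> 1/16" by auto
  show ?case
  proof (rule exI[of _ "2000 / c2"], intro conjI allI impI, goal_cases)
    case 1
    show ?case using c by simp
  next
    case (2 S P r \<gamma> \<delta> \<epsilon> \<eta> T V0)
    interpret td_schedule S P r \<gamma> \<eta> V0 T c1 c2 \<delta> \<epsilon>
      using c 2 by unfold_locales auto
    show ?case using td_error_le_whp by simp
  qed
qed

end
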